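(* Consider a system in general triangular form (GTF) with states $z^1,\dots,z^n$, drift vector field \[ a = \sum_{i=1}^{k_1-1} z^{i+1}\partial_{z^i} + \sum_{i=k_1+1}^{k_1+k_2-1} z^{i+1}\partial_{z^i} + \sum_{l=k_1+k_2}^{n-1} a^l\,\partial_{z^l}, \] and input vector fields $b_1 = \partial_{z^{k_1}} + \sum_{l=k_1+k_2}^{n-1} b^l\,\partial_{z^l}$, $b_2 = \partial_{z^n}$. Define $D_0=0$, $D_1 = \mathrm{span}\{b_1,b_2\}$ and $D_{i+1} = D_i + [a,D_i]$ for $i=1,\dots,p$, and assume that $D_1,\dots,D_p$ are involutive and $D_{p+1}$ is non-involutive. Assume further that $D_{p-1}\subset D_p\subset D_{p+1}$ with corank $2$ at each inclusion, that $D_p\not\subset \mathcal{C}(D_{p+1})$, that $[a,D_{p-1}]\subset D_p$ and $D_{p+1} = D_p + [a,D_p]$. Then $v_c := \partial_{z^{n-(p-1)}}$ is a valid choice of the vector field $v_c$ in the following sense: with $v_1 = \mathrm{ad}_a^{p-1} b_1$ and $v_2 = \partial_{z^{n-(p-1)}}$ one has $D_p = D_{p-1} + \mathrm{span}\{v_1,v_2\}$, and $(\alpha^1,\alpha^2) = (0,1)$ is a nontrivial solution of \[ (\alpha^1)^2[v_1,[v_1,a]] + 2\alpha^1\alpha^2[v_1,[v_2,a]] + (\alpha^2)^2[v_2,[v_2,a]] \in D_{p+1}, \] so that $v_c = \alpha^1 v_1 + \alpha^2 v_2 = \partial_{z^{n-(p-1)}}$ is a candidate vector field $v_c\in D_p$,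 $v_c\notin D_{p-1}$, for which $H_1 = D_{p-1}+\mathrm{span}\{v_c\}$ and $H_2 = D_p + \mathrm{span}\{[a,v_c]\}$ could satisfy $H_1\subset\mathcal{C}(H_2)$.
   Context: The general triangular form (GTF) with integers $k_1,k_2\ge1$, $k_1+k_2\le n$, states $z^1,\dots,z^n$ and inputs $v^1,v^2$ is $\dot z = a(z) + b_1(z)v^1 + b_2(z)v^2$ with $a,b_1,b_2$ as in the claim, i.e. $\dot z^i = z^{i+1}$ ($i=1,\dots,k_1-1$), $\dot z^{k_1}=v^1$, $\dot z^i = z^{i+1}$ ($i=k_1+1,\dots,k_1+k_2-1$), $\dot z^l = a^l(z^1,\dots,z^{l+1}) + b^l(z^1,\dots,z^{l+1})v^1$ ($l=k_1+k_2,\dots,n-1$), $\dot z^n = v^2$, where $b^{k_1+k_2}\neq0$ and for each $l$, $\partial_{z^{l+1}}a^l\ne0$ or $\partial_{z^{l+1}}b^l\ne0$. All objects are smooth, distributions have locally constant rank, statements are local at generic points. $[v,w]$ is the Lie bracket; $\mathrm{ad}_a b = [a,b]$, $\mathrm{ad}_a^{i} b = [a,\mathrm{ad}_a^{i-1}b]$, $\mathrm{ad}_a^0 b = b$; for distributions, $[D_1,D_2]$ is the span of brackets of their basis vector fields and $[v,D]$ the span of brackets of $v$ with basis fields of $D$. The Cauchy characteristic distribution $\mathcal{C}(D)$ is spanned by all $v\in D$ with $[v,D]\subset D$. "Corank $2$" for $D\subset D'$ means $\dim D' - \dim D = 2$. *)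

theory Defs
  imports "HOL-Analysis.Analysis"
begin

text \<open>Points of R^n are modelled as functions nat => real; only the coordinates 1..n matter.
 Vector fields map a point to a vector (nat => real), components 1..n.\<close>

type_synonym pt = "nat \<Rightarrow> real"
type_synonym vfield = "pt \<Rightarrow> nat \<Rightarrow> real"

definition open_n :: "nat \<Rightarrow> pt set \<Rightarrow> bool" where
  "open_n n U \<longleftrightarrow> (\<forall>z\<in>U. \<exists>e>0. \<forall>w. (\<forall>j\<in>{1..n}. \<bar>w j - z j\<bar> < e) \<longrightarrow> w \<in> U)"

definition cont_n :: "nat \<Rightarrow> pt set \<Rightarrow> (pt \<Rightarrow> real) \<Rightarrow> bool" where
  "cont_n n U f \<longleftrightarrow> (\<forall>z\<in>U. \<forall>\<epsilon>>0. \<exists>\<delta>>0. \<forall>w\<in>U.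
      (\<forall>j\<in>{1..n}. \<bar>w j - z j\<bar> < \<delta>) \<longrightarrow> \<bar>f w - f z\<bar> < \<epsilon>)"

definition dpart :: "nat \<Rightarrow> (pt \<Rightarrow> real) \<Rightarrow> pt \<Rightarrow> real" where
  "dpart i f z = deriv (\<lambda>t. f (z(i := t))) (z i)"

fun ipart :: "nat list \<Rightarrow> (pt \<Rightarrow> real) \<Rightarrow> pt \<Rightarrow> real" where
  "ipart [] f = f"
| "ipart (i # is) f = dpart i (ipart is f)"

definition smooth_on :: "nat \<Rightarrow> pt set \<Rightarrow> (pt \<Rightarrow> real) \<Rightarrow> bool" where
  "smooth_on n U f \<longleftrightarrow> (\<forall>is. set is \<subseteq> {1..n} \<longrightarrow>
      cont_n n U (ipart is f) \<and>
      (\<forall>i\<in>{1..n}. \<forall>z\<in>U. (\<lambda>t. ipart is f (z(i := t))) differentiable (at (z i))))"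

definition smooth_vf :: "nat \<Rightarrow> pt set \<Rightarrow> vfield \<Rightarrow> bool" where
  "smooth_vf n U v \<longleftrightarrow> (\<forall>j\<in>{1..n}. smooth_on n U (\<lambda>z. v z j))"

definition lie :: "nat \<Rightarrow> vfield \<Rightarrow> vfield \<Rightarrow> vfield" where
  "lie n v w = (\<lambda>z j. \<Sum>i=1..n. v z i * dpart i (\<lambda>y. w y j) z - w z i * dpart i (\<lambda>y. v y j) z)"

fun ad_pow :: "nat \<Rightarrow> vfield \<Rightarrow> nat \<Rightarrow> vfield \<Rightarrow> vfield" where
  "ad_pow n a 0 b = b"
| "ad_pow n a (Suc i) b = lie n a (ad_pow n a i b)"

definition coord_vf :: "nat \<Rightarrow> vfield" where
  "coord_vf i = (\<lambda>z j. if j = i then 1 else 0)"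

definition in_span :: "nat \<Rightarrow> (nat \<Rightarrow> real) list \<Rightarrow> (nat \<Rightarrow> real) \<Rightarrow> bool" where
  "in_span n vs x \<longleftrightarrow> (\<exists>c. \<forall>j\<in>{1..n}. x j = (\<Sum>k<length vs. c k * (vs ! k) j))"

definition lin_indep :: "nat \<Rightarrow> (nat \<Rightarrow> real) list \<Rightarrow> nat set \<Rightarrow> bool" where
  "lin_indep n vs I \<longleftrightarrow> (\<forall>c. (\<forall>j\<in>{1..n}. (\<Sum>k\<in>I. c k * (vs ! k) j) = 0) \<longrightarrow> (\<forall>k\<in>I. c k = 0))"

definition rank_n :: "nat \<Rightarrow> (nat \<Rightarrow> real) list \<Rightarrow> nat" where
  "rank_n n vs = Max {card I | I. I \<subseteq> {..<length vs} \<and> lin_indep n vs I}"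

text \<open>A distribution is given by a list of generating vector fields; its value at z.\<close>
definition dval :: "vfield list \<Rightarrow> pt \<Rightarrow> (nat \<Rightarrow> real) list" where
  "dval gs z = map (\<lambda>g. g z) gs"

definition in_distr :: "nat \<Rightarrow> pt set \<Rightarrow> vfield list \<Rightarrow> vfield \<Rightarrow> bool" where
  "in_distr n U gs v \<longleftrightarrow> (\<forall>z\<in>U. in_span n (dval gs z) (v z))"

definition involutive_at :: "nat \<Rightarrow> vfield list \<Rightarrow> pt \<Rightarrow> bool" where
  "involutive_at n gs z \<longleftrightarrow> (\<forall>v\<in>set gs. \<forall>w\<in>set gs. in_span n (dval gs z) (lie n v w z))"

definition cauchy_char :: "nat \<Rightarrow> pt set \<Rightarrow> vfield list \<Rightarrow> vfield set" where
  "cauchy_char n U gs = {v. smooth_vf n U v \<and> in_distr n U gs v \<and>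
      (\<forall>w. smooth_vf n U w \<and> in_distr n U gs w \<longrightarrow> in_distr n U gs (lie n v w))}"

fun Dseq :: "nat \<Rightarrow> vfield \<Rightarrow> vfield \<Rightarrow> vfield \<Rightarrow> nat \<Rightarrow> vfield list" where
  "Dseq n a b1 b2 0 = []"
| "Dseq n a b1 b2 (Suc i) =
     (if i = 0 then [b1, b2] else Dseq n a b1 b2 i @ map (lie n a) (Dseq n a b1 b2 i))"

definition gtf_a :: "nat \<Rightarrow> nat \<Rightarrow> nat \<Rightarrow> (nat \<Rightarrow> pt \<Rightarrow> real) \<Rightarrow> vfield" where
  "gtf_a n k1 k2 al = (\<lambda>z j.
      if 1 \<le> j \<and> j < k1 then z (j + 1)
      else if k1 < j \<and> j < k1 + k2 then z (j + 1)
      else if k1 + k2 \<le> j \<and> j \<le> n - 1 then al j z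
      else 0)"

definition gtf_b1 :: "nat \<Rightarrow> nat \<Rightarrow> nat \<Rightarrow> (nat \<Rightarrow> pt \<Rightarrow> real) \<Rightarrow> vfield" where
  "gtf_b1 n k1 k2 bl = (\<lambda>z j.
      if j = k1 then 1
      else if k1 + k2 \<le> j \<and> j \<le> n - 1 then bl j z
      else 0)"

definition gtf_b2 :: "nat \<Rightarrow> vfield" where
  "gtf_b2 n = coord_vf n"

definition quad_expr :: "nat \<Rightarrow> vfield \<Rightarrow> vfield \<Rightarrow> vfield \<Rightarrow> real \<Rightarrow> real \<Rightarrow> vfield" where
  "quad_expr n a v1 v2 \<alpha>1 \<alpha>2 = (\<lambda>z j.
      \<alpha>1\<^sup>2 * lie n v1 (lie n v1 a) z j + 2 * \<alpha>1 * \<alpha>2 * lie n v1 (lie n v2 a) z j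
      + \<alpha>2\<^sup>2 * lie n v2 (lie n v2 a) z j)"

end

theory Submission
  imports Defs "HOL-Library.Function_Algebras"
begin

text \<open>
  The chain \<open>ad_a^m b2\<close> is triangular: it lives in the last \<open>m+1\<close> coordinates, and its
  lowest component \<open>t_m\<close>, the coefficient of \<open>\<partial>_{n-m}\<close>, satisfies
  \<open>t_{m+1} = -t_m \<partial>_{n-m} a^{n-m-1}\<close>. While \<open>t_0, ..., t_{q-1}\<close> do not vanish,
  \<open>D_q\<close> contains \<open>\<partial>_{n-q+1}, ..., \<partial>_n\<close>.

  If some \<open>t_{q+1}\<close> with \<open>q+1 \<le> p\<close> vanished (because the chain reaches \<open>z^{k1}\<close>, where
  the drift has no \<open>\<partial>_{k1}\<close> component, or because \<open>\<partial>_{l+1} a^l = 0\<close> in the nonlinear block, where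
  involutivity of \<open>D_{q+1}\<close> then supplies \<open>\<partial>_l\<close> through \<open>[b1, ad_a^q b2]\<close>), then
  \<open>ad_a^{q+1} b2\<close> would lie in \<open>D_{q+1}\<close> at a point. Under constant rank such a rank
  deficiency persists along \<open>D_{i+1} = D_i + [a, D_i]\<close>: locally one generator is a
  combination of the others with differentiable coefficients, and the Leibniz rule carries this
  over to the brackets with \<open>a\<close>. This contradicts corank 2 at \<open>D_p \<subset> D_{p+1}\<close>.

  Hence \<open>\<partial>_{n-p+1} \<in> D_p\<close>, it is not in \<open>D_{p-1}\<close> (it would absorb \<open>ad_a^{p-1} b2\<close>),
  it replaces \<open>ad_a^{p-1} b2\<close> in \<open>D_p\<close>, and \<open>[\<partial>_{n-p+1}, [\<partial>_{n-p+1}, a]]\<close> lives in the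
  last \<open>p+1\<close> coordinates, hence in \<open>D_{p+1}\<close>.
\<close>

section \<open>Linear algebra on coordinates 1..n\<close>

text \<open>Only the coordinates \<open>1..n\<close> of a vector count. \<open>prj n\<close> forgets the others, so that
  the independence bound of the library, applied to the vector space of all functions
  \<open>nat \<Rightarrow> real\<close> under \<open>scl\<close>, bounds \<open>iindep\<close>.\<close>
definition prj :: "nat \<Rightarrow> (nat \<Rightarrow> real) \<Rightarrow> (nat \<Rightarrow> real)" where
  "prj n v = (\<lambda>j. if j \<in> {1..n} then v j else 0)"

definition scl :: "real \<Rightarrow> (nat \<Rightarrow> real) \<Rightarrow> (nat \<Rightarrow> real)" where
  "scl c v = (\<lambda>j. c * v j)"

interpretation fv: vector_space scl
  by unfold_locales (auto simp: scl_def fun_eq_iff algebra_simps)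

definition ispan :: "nat \<Rightarrow> (nat \<Rightarrow> nat \<Rightarrow> real) \<Rightarrow> nat set \<Rightarrow> (nat \<Rightarrow> real) \<Rightarrow> bool" where
  "ispan n F I x \<longleftrightarrow> (\<exists>c. \<forall>j\<in>{1..n}. x j = (\<Sum>k\<in>I. c k * F k j))"

definition iindep :: "nat \<Rightarrow> (nat \<Rightarrow> nat \<Rightarrow> real) \<Rightarrow> nat set \<Rightarrow> bool" where
  "iindep n F I \<longleftrightarrow> (\<forall>c. (\<forall>j\<in>{1..n}. (\<Sum>k\<in>I. c k * F k j) = 0) \<longrightarrow> (\<forall>k\<in>I. c k = 0))"

definition rankI :: "nat \<Rightarrow> (nat \<Rightarrow> nat \<Rightarrow> real) \<Rightarrow> nat set \<Rightarrow> nat" where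
  "rankI n F A = Max {card I | I. I \<subseteq> A \<and> iindep n F I}"

lemma in_span_ispan: "in_span n vs x \<longleftrightarrow> ispan n (nth vs) {..<length vs} x"
  by (simp add: in_span_def ispan_def atLeast0LessThan)

lemma lin_indep_iindep: "lin_indep n vs I \<longleftrightarrow> iindep n (nth vs) I"
  by (simp add: lin_indep_def iindep_def)

lemma rank_n_rankI: "rank_n n vs = rankI n (nth vs) {..<length vs}"
  by (simp add: rank_n_def rankI_def lin_indep_iindep)

lemma ispan_trans:
  assumes "ispan n F I x" "\<forall>k\<in>I. ispan n G J (F k)" "finite I" "finite J"
  shows "ispan n G J x"
proof -
  obtain c where c: "\<forall>j\<in>{1..n}. x j = (\<Sum>k\<in>I. c k * F k j)" using assms(1) ispan_def by blast
  have "\<forall>k\<in>I. \<exists>d. \<forall>j\<in>{1..n}. F k j = (\<Sum>m\<in>J. d m * G m j)" using assms(2) ispan_def by blast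
  then obtain d where d: "\<forall>k\<in>I. \<forall>j\<in>{1..n}. F k j = (\<Sum>m\<in>J. d k m * G m j)" by metis
  have "\<forall>j\<in>{1..n}. x j = (\<Sum>m\<in>J. (\<Sum>k\<in>I. c k * d k m) * G m j)"
  proof
    fix j assume j: "j \<in> {1..n}"
    have "x j = (\<Sum>k\<in>I. c k * (\<Sum>m\<in>J. d k m * G m j))" using c d j by simp
    also have "\<dots> = (\<Sum>k\<in>I. \<Sum>m\<in>J. c k * d k m * G m j)"
      by (simp add: sum_distrib_left mult.assoc)
    also have "\<dots> = (\<Sum>m\<in>J. \<Sum>k\<in>I. c k * d k m * G m j)" by (rule sum.swap)
    also have "\<dots> = (\<Sum>m\<in>J. (\<Sum>k\<in>I. c k * d k m) * G m j)"
      by (simp add: sum_distrib_right)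
    finally show "x j = (\<Sum>m\<in>J. (\<Sum>k\<in>I. c k * d k m) * G m j)" .
  qed
  then show ?thesis unfolding ispan_def by (rule exI[of _ "\<lambda>m. \<Sum>k\<in>I. c k * d k m"])
qed

lemma ispan_mem: "finite I \<Longrightarrow> k \<in> I \<Longrightarrow> ispan n F I (F k)"
  unfolding ispan_def
proof (rule exI[of _ "\<lambda>m. if m = k then 1 else 0"], intro ballI)
  fix j assume "finite I" "k \<in> I"
  have "(\<Sum>m\<in>I. (if m = k then 1 else 0) * F m j) = (\<Sum>m\<in>I. if m = k then F m j else 0)"
    by (rule sum.cong) auto
  also have "\<dots> = F k j" using \<open>finite I\<close> \<open>k \<in> I\<close> by simp
  finally show "F k j = (\<Sum>m\<in>I. (if m = k then 1 else 0) * F m j)" by simp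
qed

lemma ispan_cong: "(\<forall>j\<in>{1..n}. x j = y j) \<Longrightarrow> ispan n F I x = ispan n F I y"
  unfolding ispan_def by auto

lemma ispan_zero: "(\<forall>j\<in>{1..n}. x j = 0) \<Longrightarrow> ispan n F I x"
  unfolding ispan_def by (rule exI[of _ "\<lambda>_. 0"]) simp

lemma ispan_add:
  assumes "ispan n F I x" "ispan n F I y"
  shows "ispan n F I (\<lambda>j. x j + y j)"
proof -
  obtain c where c: "\<forall>j\<in>{1..n}. x j = (\<Sum>k\<in>I. c k * F k j)" using assms(1) ispan_def by blast
  obtain d where d: "\<forall>j\<in>{1..n}. y j = (\<Sum>k\<in>I. d k * F k j)" using assms(2) ispan_def by blast
  show ?thesis unfolding ispan_def
    by (rule exI[of _ "\<lambda>k. c k + d k"]) (simp add: c d distrib_right sum.distrib)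
qed

lemma ispan_scale:
  assumes "ispan n F I x"
  shows "ispan n F I (\<lambda>j. r * x j)"
proof -
  obtain c where c: "\<forall>j\<in>{1..n}. x j = (\<Sum>k\<in>I. c k * F k j)" using assms(1) ispan_def by blast
  show ?thesis unfolding ispan_def
    by (rule exI[of _ "\<lambda>k. r * c k"]) (simp add: c sum_distrib_left mult.assoc)
qed

lemma ispan_sum:
  assumes "finite S" "\<forall>s\<in>S. ispan n F I (x s)"
  shows "ispan n F I (\<lambda>j. \<Sum>s\<in>S. x s j)"
  using assms
proof (induction S rule: finite_induct)
  case empty then show ?case by (simp add: ispan_zero)
next
  case (insert s S)
  then show ?case using ispan_add[of n F I "x s" "\<lambda>j. \<Sum>s\<in>S. x s j"] by simp
qed

lemma iindep_subset: "iindep n F I \<Longrightarrow> J \<subseteq> I \<Longrightarrow> finite I \<Longrightarrow> iindep n F J"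
  unfolding iindep_def
proof (intro allI impI ballI)
  fix c k
  assume H: "\<forall>c. (\<forall>j\<in>{1..n}. (\<Sum>k\<in>I. c k * F k j) = 0) \<longrightarrow> (\<forall>k\<in>I. c k = 0)"
    and JI: "J \<subseteq> I" and fI: "finite I" and s: "\<forall>j\<in>{1..n}. (\<Sum>k\<in>J. c k * F k j) = 0" and k: "k \<in> J"
  let ?c = "\<lambda>k. if k \<in> J then c k else 0"
  have "\<forall>j\<in>{1..n}. (\<Sum>k\<in>I. ?c k * F k j) = 0"
  proof
    fix j assume "j \<in> {1..n}"
    have "(\<Sum>k\<in>I. ?c k * F k j) = (\<Sum>k\<in>I. if k \<in> J then c k * F k j else 0)"
      by (rule sum.cong) auto
    also have "\<dots> = (\<Sum>k\<in>I \<inter> J. c k * F k j)" using fI by (rule sum.inter_restrict[symmetric])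
    also have "I \<inter> J = J" using JI by blast
    finally have "(\<Sum>k\<in>I. ?c k * F k j) = (\<Sum>k\<in>J. c k * F k j)" .
    then show "(\<Sum>k\<in>I. ?c k * F k j) = 0" using s \<open>j \<in> {1..n}\<close> by simp
  qed
  then have "\<forall>k\<in>I. ?c k = 0" using H[rule_format, of ?c] by blast
  then have "(if k \<in> J then c k else 0) = 0" using k JI by blast
  then show "c k = 0" using k by simp
qed

lemma iindep_insert:
  assumes ind: "iindep n F I" and fI: "finite I" and iI: "i \<notin> I" and ns: "\<not> ispan n F I (F i)"
  shows "iindep n F (insert i I)"
  unfolding iindep_def
proof (intro allI impI)
  fix c assume s: "\<forall>j\<in>{1..n}. (\<Sum>k\<in>insert i I. c k * F k j) = 0"
  have ci: "c i = 0"
  proof (rule ccontr)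
    assume "c i \<noteq> 0"
    have "\<forall>j\<in>{1..n}. F i j = (\<Sum>k\<in>I. (- c k / c i) * F k j)"
    proof
      fix j assume j: "j \<in> {1..n}"
      have "c i * F i j + (\<Sum>k\<in>I. c k * F k j) = 0" using s j fI iI by simp
      then have "F i j = - (\<Sum>k\<in>I. c k * F k j) / c i" using \<open>c i \<noteq> 0\<close>
        by (simp add: field_simps)
      also have "\<dots> = (\<Sum>k\<in>I. (- c k / c i) * F k j)"
        by (simp add: sum_divide_distrib sum_negf[symmetric])
      finally show "F i j = (\<Sum>k\<in>I. (- c k / c i) * F k j)" .
    qed
    then have "ispan n F I (F i)" unfolding ispan_def by (rule exI[of _ "\<lambda>k. - c k / c i"])
    with ns show False by blast
  qed
  have "\<forall>j\<in>{1..n}. (\<Sum>k\<in>I. c k * F k j) = 0" using s ci fI iI by simp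
  then have "\<forall>k\<in>I. c k = 0" using ind iindep_def by blast
  then show "\<forall>k\<in>insert i I. c k = 0" using ci by simp
qed

lemma iindep_empty: "iindep n F {}"
  by (simp add: iindep_def)

lemma rankI_set_finite: "finite A \<Longrightarrow> finite {card I | I. I \<subseteq> A \<and> iindep n F I}"
  by (rule finite_subset[of _ "card ` Pow A"]) auto

lemma rankI_ex:
  assumes "finite A"
  shows "\<exists>I. I \<subseteq> A \<and> iindep n F I \<and> card I = rankI n F A"
proof -
  have "rankI n F A \<in> {card I | I. I \<subseteq> A \<and> iindep n F I}"
    unfolding rankI_def
    apply (rule Max_in[OF rankI_set_finite[OF assms]])
    using iindep_empty by blast
  then show ?thesis by auto
qed

lemma rankI_ge:
  assumes "finite A" "I \<subseteq> A" "iindep n F I"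
  shows "card I \<le> rankI n F A"
  unfolding rankI_def
  apply (rule Max_ge[OF rankI_set_finite[OF assms(1)]])
  using assms by blast

lemma ispan_of_maximal_iindep:
  assumes fA: "finite A" and IA: "I \<subseteq> A" and ind: "iindep n F I" and cI: "card I = rankI n F A"
    and k: "k \<in> A"
  shows "ispan n F I (F k)"
proof (rule ccontr)
  assume ns: "\<not> ispan n F I (F k)"
  have fI: "finite I" using fA IA finite_subset by blast
  have kI: "k \<notin> I" using ispan_mem[OF fI] ns by blast
  have "iindep n F (insert k I)" by (rule iindep_insert[OF ind fI kI ns])
  then have "card (insert k I) \<le> rankI n F A" using rankI_ge[OF fA] IA k by blast
  then show False using cI kI fI by simp
qed

lemma prj_in_fv_span:
  assumes "ispan n F I x" "finite I"
  shows "prj n x \<in> fv.span ((\<lambda>k. prj n (F k)) ` I)"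
proof -
  obtain c where c: "\<forall>j\<in>{1..n}. x j = (\<Sum>k\<in>I. c k * F k j)" using assms(1) ispan_def by blast
  have eq: "prj n x = (\<Sum>k\<in>I. scl (c k) (prj n (F k)))"
  proof
    fix j
    have "(\<Sum>k\<in>I. scl (c k) (prj n (F k))) j = (\<Sum>k\<in>I. scl (c k) (prj n (F k)) j)"
      by (induction I rule: infinite_finite_induct) auto
    then show "prj n x j = (\<Sum>k\<in>I. scl (c k) (prj n (F k))) j"
      using c by (auto simp: prj_def scl_def)
  qed
  show ?thesis unfolding eq
    by (intro fv.span_sum fv.span_scale fv.span_base) auto
qed

lemma sum_fun_apply: "(\<Sum>k\<in>I. (f k :: nat \<Rightarrow> real)) j = (\<Sum>k\<in>I. f k j)"
  by (induction I rule: infinite_finite_induct) auto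

lemma inj_on_prj_of_iindep:
  assumes ind: "iindep n F I" and fI: "finite I"
  shows "inj_on (\<lambda>k. prj n (F k)) I"
proof (rule inj_onI, rule ccontr)
  fix k1 k2 assume k1: "k1 \<in> I" and k2: "k2 \<in> I" and eq: "prj n (F k1) = prj n (F k2)" and ne: "k1 \<noteq> k2"
  let ?c = "\<lambda>k. if k = k1 then 1 else if k = k2 then -1 else (0::real)"
  have "\<forall>j\<in>{1..n}. (\<Sum>k\<in>I. ?c k * F k j) = 0"
  proof
    fix j assume j: "j \<in> {1..n}"
    have "F k1 j = F k2 j" using eq j unfolding prj_def by (metis)
    have "(\<Sum>k\<in>I. ?c k * F k j) = (\<Sum>k\<in>{k1,k2}. ?c k * F k j)"
      by (rule sum.mono_neutral_right) (use fI k1 k2 in auto)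
    also have "\<dots> = 0" using ne \<open>F k1 j = F k2 j\<close> by simp
    finally show "(\<Sum>k\<in>I. ?c k * F k j) = 0" .
  qed
  moreover have "(\<forall>j\<in>{1..n}. (\<Sum>k\<in>I. ?c k * F k j) = 0) \<longrightarrow> (\<forall>k\<in>I. ?c k = 0)"
    using ind unfolding iindep_def by (rule spec)
  ultimately have "\<forall>k\<in>I. ?c k = 0" by blast
  then have "?c k1 = 0" using k1 by blast
  then show False by simp
qed

lemma fv_independent_of_iindep:
  assumes ind: "iindep n F I" and fI: "finite I"
  shows "fv.independent ((\<lambda>k. prj n (F k)) ` I)"
proof (rule fv.independent_if_scalars_zero)
  show "finite ((\<lambda>k. prj n (F k)) ` I)" using fI by simp
next
  fix f x assume s: "(\<Sum>x\<in>(\<lambda>k. prj n (F k)) ` I. scl (f x) x) = 0" and x: "x \<in> (\<lambda>k. prj n (F k)) ` I"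
  let ?c = "\<lambda>k. f (prj n (F k))"
  have "\<forall>j\<in>{1..n}. (\<Sum>k\<in>I. ?c k * F k j) = 0"
  proof
    fix j assume j: "j \<in> {1..n}"
    have "(\<Sum>x\<in>(\<lambda>k. prj n (F k)) ` I. scl (f x) x) = (\<Sum>k\<in>I. scl (?c k) (prj n (F k)))"
      by (simp add: sum.reindex[OF inj_on_prj_of_iindep[OF ind fI]])
    then have "(\<Sum>k\<in>I. scl (?c k) (prj n (F k))) j = 0" using s by simp
    then show "(\<Sum>k\<in>I. ?c k * F k j) = 0" using j by (simp add: sum_fun_apply scl_def prj_def)
  qed
  moreover have "(\<forall>j\<in>{1..n}. (\<Sum>k\<in>I. ?c k * F k j) = 0) \<longrightarrow> (\<forall>k\<in>I. ?c k = 0)"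
    using ind unfolding iindep_def by (rule spec)
  ultimately have "\<forall>k\<in>I. ?c k = 0" by blast
  then show "f x = 0" using x by auto
qed

lemma iindep_card_le_ispan:
  assumes fI: "finite I" and fJ: "finite J" and ind: "iindep n F I"
    and sp: "\<forall>k\<in>I. ispan n G J (F k)"
  shows "card I \<le> card J"
proof -
  have ii: "inj_on (\<lambda>k. prj n (F k)) I" and id: "fv.independent ((\<lambda>k. prj n (F k)) ` I)"
    using inj_on_prj_of_iindep[OF ind fI] fv_independent_of_iindep[OF ind fI] by auto
  have "(\<lambda>k. prj n (F k)) ` I \<subseteq> fv.span ((\<lambda>k. prj n (G k)) ` J)"
    using prj_in_fv_span[OF _ fJ] sp by blast
  then have "finite ((\<lambda>k. prj n (F k)) ` I) \<and> card ((\<lambda>k. prj n (F k)) ` I) \<le> card ((\<lambda>k. prj n (G k)) ` J)"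
    by (rule fv.independent_span_bound[OF finite_imageI[OF fJ] id])
  then have "card ((\<lambda>k. prj n (F k)) ` I) \<le> card ((\<lambda>k. prj n (G k)) ` J)" by (rule conjunct2)
  also have "\<dots> \<le> card J" using fJ by (rule card_image_le)
  finally show ?thesis unfolding card_image[OF ii] .
qed

lemma rankI_mono_span:
  assumes fA: "finite A" and fB: "finite B" and sp: "\<forall>k\<in>A. ispan n G B (F k)"
  shows "rankI n F A \<le> rankI n G B"
proof -
  obtain I where I: "I \<subseteq> A" "iindep n F I" "card I = rankI n F A" using rankI_ex[OF fA] by blast
  obtain J where J: "J \<subseteq> B" "iindep n G J" "card J = rankI n G B" using rankI_ex[OF fB] by blast
  have fI: "finite I" using fA I(1) finite_subset by blast
  have fJ: "finite J" using fB J(1) finite_subset by blast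
  have "\<forall>m\<in>B. ispan n G J (G m)" using ispan_of_maximal_iindep[OF fB J(1) J(2) J(3)] by blast
  then have "\<forall>k\<in>I. ispan n G J (F k)" using sp I(1) ispan_trans[OF _ _ fB fJ] by blast
  then have "card I \<le> card J" using iindep_card_le_ispan[OF fI fJ I(2)] by blast
  then show ?thesis using I J by simp
qed

lemma rankI_insert:
  assumes fA: "finite A"
  shows "rankI n F (insert i A) \<le> rankI n F A + 1"
proof -
  obtain I where I: "I \<subseteq> insert i A" "iindep n F I" "card I = rankI n F (insert i A)"
    using rankI_ex[of "insert i A"] fA by blast
  have fI: "finite I" using fA I(1) finite_subset by blast
  have "iindep n F (I - {i})" using iindep_subset[OF I(2) _ fI] by blast
  moreover have "I - {i} \<subseteq> A" using I(1) by blast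
  ultimately have "card (I - {i}) \<le> rankI n F A" using rankI_ge[OF fA] by blast
  moreover have "card I \<le> card (I - {i}) + 1"
  proof (cases "i \<in> I")
    case True then show ?thesis using card.remove[OF fI True] by simp
  next
    case False then show ?thesis by simp
  qed
  ultimately show ?thesis using I(3) by linarith
qed

lemma rankI_cong: "(\<forall>k\<in>A. F k = G k) \<Longrightarrow> rankI n F A = rankI n G A"
proof -
  assume H: "\<forall>k\<in>A. F k = G k"
  have "\<And>I. I \<subseteq> A \<Longrightarrow> iindep n F I = iindep n G I"
  proof -
    fix I assume "I \<subseteq> A"
    then have "\<And>c j. (\<Sum>k\<in>I. c k * F k j) = (\<Sum>k\<in>I. c k * G k j)" using H by (intro sum.cong) auto
    then show "iindep n F I = iindep n G I" unfolding iindep_def by simp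
  qed
  then have "{card I | I. I \<subseteq> A \<and> iindep n F I} = {card I | I. I \<subseteq> A \<and> iindep n G I}" by blast
  then show ?thesis unfolding rankI_def by simp
qed

lemma ispan_cong_F: "(\<forall>k\<in>I. F k = G k) \<Longrightarrow> ispan n F I x = ispan n G I x"
proof -
  assume H: "\<forall>k\<in>I. F k = G k"
  then have "\<And>c j. (\<Sum>k\<in>I. c k * F k j) = (\<Sum>k\<in>I. c k * G k j)" by (intro sum.cong) auto
  then show ?thesis unfolding ispan_def by simp
qed

lemma in_span_mem: "v \<in> set L \<Longrightarrow> in_span n L v"
  unfolding in_span_ispan by (metis finite_lessThan in_set_conv_nth ispan_mem lessThan_iff)

lemma in_span_trans: "in_span n L x \<Longrightarrow> \<forall>v\<in>set L. in_span n M v \<Longrightarrow> in_span n M x"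
  unfolding in_span_ispan
  by (rule ispan_trans[of n "nth L" "{..<length L}" x "nth M" "{..<length M}"]) (use nth_mem in \<open>auto simp: in_span_ispan[symmetric]\<close>)

lemma in_span_add: "in_span n L x \<Longrightarrow> in_span n L y \<Longrightarrow> in_span n L (\<lambda>j. x j + y j)"
  unfolding in_span_ispan by (rule ispan_add)

lemma in_span_scale: "in_span n L x \<Longrightarrow> in_span n L (\<lambda>j. r * x j)"
  unfolding in_span_ispan by (rule ispan_scale)

lemma in_span_cong: "(\<forall>j\<in>{1..n}. x j = y j) \<Longrightarrow> in_span n L x = in_span n L y"
  unfolding in_span_ispan by (rule ispan_cong)

lemma in_span_sum: "finite S \<Longrightarrow> \<forall>s\<in>S. in_span n L (x s) \<Longrightarrow> in_span n L (\<lambda>j. \<Sum>s\<in>S. x s j)"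
  unfolding in_span_ispan by (rule ispan_sum)

lemma rank_mono_span: "\<forall>v\<in>set L. in_span n M v \<Longrightarrow> rank_n n L \<le> rank_n n M"
  unfolding rank_n_rankI
  by (rule rankI_mono_span) (auto simp: in_span_ispan[symmetric])

lemma rank_snoc: "rank_n n (L @ [x]) \<le> rank_n n L + 1"
proof -
  have "rank_n n (L @ [x]) = rankI n (nth (L @ [x])) (insert (length L) {..<length L})"
    unfolding rank_n_rankI by (simp add: lessThan_Suc)
  also have "\<dots> \<le> rankI n (nth (L @ [x])) {..<length L} + 1" by (rule rankI_insert) simp
  also have "rankI n (nth (L @ [x])) {..<length L} = rank_n n L"
    unfolding rank_n_rankI by (rule rankI_cong) (simp add: nth_append)
  finally show ?thesis .
qed

lemma in_span_mono: "set L \<subseteq> set M \<Longrightarrow> in_span n L x \<Longrightarrow> in_span n M x"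
  using in_span_trans in_span_mem by blast

lemma iindep_cong: "(\<forall>k\<in>I. F k = G k) \<Longrightarrow> iindep n F I = iindep n G I"
proof -
  assume H: "\<forall>k\<in>I. F k = G k"
  then have "\<And>c j. (\<Sum>k\<in>I. c k * F k j) = (\<Sum>k\<in>I. c k * G k j)" by (intro sum.cong) auto
  then show ?thesis unfolding iindep_def by simp
qed

lemma ispan_mono_idx:
  assumes "ispan n F I x" "I \<subseteq> J" "finite J"
  shows "ispan n F J x"
proof (rule ispan_trans[OF assms(1) _ _ assms(3)])
  show "finite I" using assms(2,3) finite_subset by blast
  show "\<forall>k\<in>I. ispan n F J (F k)" using assms(2,3) ispan_mem by blast
qed

lemma rank_snoc_strict:
  assumes ns: "\<not> in_span n M x"
  shows "rank_n n M + 1 \<le> rank_n n (M @ [x])"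
proof -
  obtain I where I: "I \<subseteq> {..<length M}" "iindep n (nth M) I" "card I = rank_n n M"
    using rankI_ex[of "{..<length M}" n "nth M"] unfolding rank_n_rankI by auto
  have fI: "finite I" using I(1) finite_subset by blast
  have eqI: "\<forall>k\<in>I. (M @ [x]) ! k = M ! k" using I(1) by (auto simp: nth_append)
  have i2: "iindep n (nth (M @ [x])) I" using I(2) iindep_cong[OF eqI] by simp
  have mI: "length M \<notin> I" using I(1) by auto
  have "\<not> ispan n (nth (M @ [x])) I ((M @ [x]) ! length M)"
  proof
    assume "ispan n (nth (M @ [x])) I ((M @ [x]) ! length M)"
    then have "ispan n (nth M) I x" using ispan_cong_F[OF eqI] by simp
    then have "ispan n (nth M) {..<length M} x" using ispan_mono_idx I(1) by blast
    then show False using ns unfolding in_span_ispan by simp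
  qed
  then have "iindep n (nth (M @ [x])) (insert (length M) I)"
    using iindep_insert[OF i2 fI mI] by blast
  then have "card (insert (length M) I) \<le> rank_n n (M @ [x])"
    unfolding rank_n_rankI using I(1) by (intro rankI_ge) auto
  then show ?thesis using I(3) fI mI by simp
qed

lemma rank_same_span:
  "\<forall>v\<in>set A. in_span n B v \<Longrightarrow> \<forall>v\<in>set B. in_span n A v \<Longrightarrow> rank_n n A = rank_n n B"
  using rank_mono_span le_antisym by metis

lemma set_dval: "set (dval L y) = (\<lambda>g. g y) ` set L"
  by (simp add: dval_def)

lemma dval_append: "dval (A @ B) y = dval A y @ dval B y"
  by (simp add: dval_def)

lemma dval_nth: "k < length L \<Longrightarrow> dval L y ! k = (L ! k) y"
  by (simp add: dval_def)

lemma length_dval: "length (dval L y) = length L"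
  by (simp add: dval_def)

lemma in_span_dval: "g \<in> set L \<Longrightarrow> in_span n (dval L y) (g y)"
  by (rule in_span_mem) (simp add: set_dval)

lemma in_span_iff_of_spans:
  assumes "\<forall>v\<in>set A. in_span n B v" "\<forall>v\<in>set B. in_span n A v"
  shows "in_span n A x \<longleftrightarrow> in_span n B x"
  using in_span_trans[of n A x B] in_span_trans[of n B x A] assms by blast

lemma rank_dval_set_cong: "set A = set B \<Longrightarrow> rank_n n (dval A y) = rank_n n (dval B y)"
  by (intro rank_same_span) (auto simp: set_dval intro: in_span_mem)

lemma rank_n_witness: "\<exists>I\<subseteq>{..<length vs}. iindep n (nth vs) I \<and> card I = rank_n n vs"
  using rankI_ex[of "{..<length vs}" n "nth vs"] unfolding rank_n_rankI by auto

lemma ispan_of_rank_le_card: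
  assumes I: "I \<subseteq> {..<length vs}" "iindep n (nth vs) I" and rk: "rank_n n (vs @ [x]) \<le> card I"
  shows "ispan n (nth vs) I x"
proof (rule ccontr)
  assume ns: "\<not> ispan n (nth vs) I x"
  let ?m = "length vs"
  have fI: "finite I" and mI: "?m \<notin> I" using I(1) finite_subset by auto
  have eq: "\<forall>k\<in>I. (vs @ [x]) ! k = vs ! k" using I(1) by (auto simp: nth_append)
  have "iindep n (nth (vs @ [x])) (insert ?m I)"
  proof (rule iindep_insert[OF _ fI mI])
    show "iindep n (nth (vs @ [x])) I" using I(2) iindep_cong[OF eq] by simp
    show "\<not> ispan n (nth (vs @ [x])) I ((vs @ [x]) ! ?m)" using ns ispan_cong_F[OF eq] by simp
  qed
  then have "card (insert ?m I) \<le> rank_n n (vs @ [x])"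
    unfolding rank_n_rankI using I(1) by (intro rankI_ge) auto
  with rk fI mI show False by simp
qed

section \<open>Partial derivatives along coordinate lines\<close>

definition cube :: "nat \<Rightarrow> pt \<Rightarrow> real \<Rightarrow> pt set" where
  "cube n z d = {w. \<forall>j\<in>{1..n}. \<bar>w j - z j\<bar> < d}"

definition has_dpart :: "nat \<Rightarrow> (pt \<Rightarrow> real) \<Rightarrow> pt \<Rightarrow> bool" where
  "has_dpart i f z \<longleftrightarrow> (\<lambda>t. f (z(i := t))) differentiable (at (z i))"

lemma has_dpart_DERIV: "has_dpart i f z \<Longrightarrow> ((\<lambda>t. f (z(i := t))) has_real_derivative dpart i f z) (at (z i))"
  unfolding has_dpart_def dpart_def using DERIV_deriv_iff_real_differentiable by blast

lemma DERIV_imp_dpart: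
  assumes "((\<lambda>t. f (z(i := t))) has_real_derivative D) (at (z i))"
  shows "dpart i f z = D" "has_dpart i f z"
  using assms unfolding dpart_def has_dpart_def
  by (auto intro: DERIV_imp_deriv simp: real_differentiable_def)

lemma cube_center: "d > 0 \<Longrightarrow> z \<in> cube n z d"
  by (simp add: cube_def)

lemma cube_mono: "d' \<le> d \<Longrightarrow> cube n z d' \<subseteq> cube n z d"
  by (auto simp: cube_def)

lemma open_n_cube: "open_n n U \<Longrightarrow> z \<in> U \<Longrightarrow> \<exists>d>0. cube n z d \<subseteq> U"
  unfolding open_n_def cube_def by blast

lemma eventually_line_in_cube:
  assumes "d > 0"
  shows "eventually (\<lambda>t. z(i := t) \<in> cube n z d) (nhds (z i))"
proof -
  have "\<forall>t. dist t (z i) < d \<longrightarrow> z(i := t) \<in> cube n z d"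
    using assms by (auto simp: cube_def dist_real_def)
  then show ?thesis using assms unfolding eventually_nhds_metric by blast
qed

lemma dpart_local:
  assumes "d > 0" "\<forall>w\<in>cube n z d. f w = g w"
  shows "dpart i f z = dpart i g z" "has_dpart i f z \<longleftrightarrow> has_dpart i g z"
proof -
  have ev: "eventually (\<lambda>t. f (z(i := t)) = g (z(i := t))) (nhds (z i))"
    using eventually_line_in_cube[OF assms(1), of z i n] assms(2) by (auto elim: eventually_mono)
  show "dpart i f z = dpart i g z" unfolding dpart_def by (rule deriv_cong_ev[OF ev refl])
  have "\<And>D. ((\<lambda>t. f (z(i := t))) has_real_derivative D) (at (z i)) \<longleftrightarrow>
             ((\<lambda>t. g (z(i := t))) has_real_derivative D) (at (z i))"
    by (rule DERIV_cong_ev[OF refl ev refl])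
  then show "has_dpart i f z \<longleftrightarrow> has_dpart i g z" unfolding has_dpart_def real_differentiable_def by simp
qed

lemma dpart_local_open:
  assumes "open_n n S" "z \<in> S" "\<forall>w\<in>S. f w = g w"
  shows "dpart i f z = dpart i g z" "has_dpart i f z \<longleftrightarrow> has_dpart i g z"
proof -
  obtain d where d: "d > 0" "cube n z d \<subseteq> S" using open_n_cube[OF assms(1,2)] by blast
  show "dpart i f z = dpart i g z" "has_dpart i f z \<longleftrightarrow> has_dpart i g z"
    using dpart_local[OF d(1), of n z f g i] d(2) assms(3) by auto
qed

lemma dpart_const: "dpart i (\<lambda>y. c) z = 0" "has_dpart i (\<lambda>y. c) z"
  using DERIV_imp_dpart[of "\<lambda>y. c" z i 0] by auto

lemma dpart_add:
  assumes "has_dpart i f z" "has_dpart i g z"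
  shows "dpart i (\<lambda>y. f y + g y) z = dpart i f z + dpart i g z" "has_dpart i (\<lambda>y. f y + g y) z"
  using DERIV_imp_dpart[OF DERIV_add[OF has_dpart_DERIV[OF assms(1)] has_dpart_DERIV[OF assms(2)]]] by auto

lemma dpart_diff:
  assumes "has_dpart i f z" "has_dpart i g z"
  shows "dpart i (\<lambda>y. f y - g y) z = dpart i f z - dpart i g z" "has_dpart i (\<lambda>y. f y - g y) z"
  using DERIV_imp_dpart[OF DERIV_diff[OF has_dpart_DERIV[OF assms(1)] has_dpart_DERIV[OF assms(2)]]] by auto

lemma dpart_mult:
  assumes "has_dpart i f z" "has_dpart i g z"
  shows "dpart i (\<lambda>y. f y * g y) z = dpart i f z * g z + f z * dpart i g z" "has_dpart i (\<lambda>y. f y * g y) z"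
  using DERIV_imp_dpart[OF DERIV_mult[OF has_dpart_DERIV[OF assms(1)] has_dpart_DERIV[OF assms(2)]]] by auto

lemma dpart_div:
  assumes "has_dpart i f z" "has_dpart i g z" "g z \<noteq> 0"
  shows "dpart i (\<lambda>y. f y / g y) z = (dpart i f z * g z - f z * dpart i g z) / (g z * g z)"
        "has_dpart i (\<lambda>y. f y / g y) z"
  using DERIV_imp_dpart[OF DERIV_divide[OF has_dpart_DERIV[OF assms(1)] has_dpart_DERIV[OF assms(2)]]] assms(3) by auto

lemma dpart_sum:
  assumes "finite S" "\<forall>s\<in>S. has_dpart i (f s) z"
  shows "dpart i (\<lambda>y. \<Sum>s\<in>S. f s y) z = (\<Sum>s\<in>S. dpart i (f s) z)" "has_dpart i (\<lambda>y. \<Sum>s\<in>S. f s y) z"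
proof -
  have "((\<lambda>t. \<Sum>s\<in>S. f s (z(i := t))) has_real_derivative (\<Sum>s\<in>S. dpart i (f s) z)) (at (z i))"
    by (rule DERIV_sum) (use assms(2) has_dpart_DERIV in blast)
  then show "dpart i (\<lambda>y. \<Sum>s\<in>S. f s y) z = (\<Sum>s\<in>S. dpart i (f s) z)" "has_dpart i (\<lambda>y. \<Sum>s\<in>S. f s y) z"
    using DERIV_imp_dpart[of "\<lambda>y. \<Sum>s\<in>S. f s y" z i] by auto
qed

lemma dpart_coord: "dpart i (\<lambda>y. y k) z = (if i = k then 1 else 0)" "has_dpart i (\<lambda>y. y k) z"
proof -
  have "((\<lambda>t. (z(i := t)) k) has_real_derivative (if i = k then 1 else 0)) (at (z i))"
    by (cases "i = k") auto
  then show "dpart i (\<lambda>y. y k) z = (if i = k then 1 else 0)" "has_dpart i (\<lambda>y. y k) z"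
    using DERIV_imp_dpart[of "\<lambda>y. y k" z i] by auto
qed

lemma dpart_const_line:
  assumes "\<forall>t. f (z(i := t)) = f z"
  shows "dpart i f z = 0" "has_dpart i f z"
proof -
  have "(\<lambda>t. f (z(i := t))) = (\<lambda>t. f z)" using assms by auto
  then have "((\<lambda>t. f (z(i := t))) has_real_derivative 0) (at (z i))" by simp
  then show "dpart i f z = 0" "has_dpart i f z" using DERIV_imp_dpart by auto
qed

lemma cont_nD:
  assumes "cont_n n N f" "z \<in> N" "e > 0"
  shows "\<exists>d>0. \<forall>w\<in>N. (\<forall>j\<in>{1..n}. \<bar>w j - z j\<bar> < d) \<longrightarrow> \<bar>f w - f z\<bar> < e"
  using assms unfolding cont_n_def by blast

text \<open>Turns \<open>cont_n\<close> into a \<open>tendsto\<close> statement, so that the library's limit rules apply.\<close>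
definition near :: "nat \<Rightarrow> pt set \<Rightarrow> pt \<Rightarrow> pt filter" where
  "near n N z = (INF d\<in>{0<..}. principal {w\<in>N. \<forall>j\<in>{1..n}. \<bar>w j - z j\<bar> < (d::real)})"

lemma eventually_near:
  "eventually P (near n N z) \<longleftrightarrow> (\<exists>d>0. \<forall>w\<in>N. (\<forall>j\<in>{1..n}. \<bar>w j - z j\<bar> < d) \<longrightarrow> P w)"
  unfolding near_def
proof (subst eventually_INF_base)
  show "{0<..} \<noteq> ({} :: real set)" by auto
next
  fix a b :: real assume "a \<in> {0<..}" "b \<in> {0<..}"
  then show "\<exists>x\<in>{0<..}. principal {w \<in> N. \<forall>j\<in>{1..n}. \<bar>w j - z j\<bar> < x}
      \<le> inf (principal {w \<in> N. \<forall>j\<in>{1..n}. \<bar>w j - z j\<bar> < a}) (principal {w \<in> N. \<forall>j\<in>{1..n}. \<bar>w j - z j\<bar> < b})"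
    by (intro bexI[of _ "min a b"]) auto
next
  show "(\<exists>b\<in>{0<..}. eventually P (principal {w \<in> N. \<forall>j\<in>{1..n}. \<bar>w j - z j\<bar> < b})) =
    (\<exists>d>0. \<forall>w\<in>N. (\<forall>j\<in>{1..n}. \<bar>w j - z j\<bar> < d) \<longrightarrow> P w)"
    by (auto simp: eventually_principal)
qed

lemma cont_n_iff_tendsto: "cont_n n N f \<longleftrightarrow> (\<forall>z\<in>N. (f \<longlongrightarrow> f z) (near n N z))"
  unfolding cont_n_def tendsto_iff eventually_near dist_real_def by blast

lemma cont_n_const: "cont_n n N (\<lambda>y. c)"
  unfolding cont_n_iff_tendsto by simp

lemma cont_n_coord: "k \<in> {1..n} \<Longrightarrow> cont_n n N (\<lambda>y. y k)"
  unfolding cont_n_def by (intro ballI allI impI, rule_tac x=\<epsilon> in exI) auto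

lemma cont_n_add: "cont_n n N f \<Longrightarrow> cont_n n N g \<Longrightarrow> cont_n n N (\<lambda>y. f y + g y)"
  unfolding cont_n_iff_tendsto by (auto intro: tendsto_add)

lemma cont_n_diff: "cont_n n N f \<Longrightarrow> cont_n n N g \<Longrightarrow> cont_n n N (\<lambda>y. f y - g y)"
  unfolding cont_n_iff_tendsto by (auto intro: tendsto_diff)

lemma cont_n_mult: "cont_n n N f \<Longrightarrow> cont_n n N g \<Longrightarrow> cont_n n N (\<lambda>y. f y * g y)"
  unfolding cont_n_iff_tendsto by (auto intro: tendsto_mult)

lemma cont_n_div: "cont_n n N f \<Longrightarrow> cont_n n N g \<Longrightarrow> \<forall>y\<in>N. g y \<noteq> 0 \<Longrightarrow> cont_n n N (\<lambda>y. f y / g y)"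
  unfolding cont_n_iff_tendsto by (auto intro: tendsto_divide)

lemma cont_n_sum: "finite S \<Longrightarrow> \<forall>s\<in>S. cont_n n N (f s) \<Longrightarrow> cont_n n N (\<lambda>y. \<Sum>s\<in>S. f s y)"
  unfolding cont_n_iff_tendsto by (auto intro: tendsto_sum)

lemma cont_n_mono: "cont_n n N f \<Longrightarrow> M \<subseteq> N \<Longrightarrow> cont_n n M f"
  unfolding cont_n_def by blast

lemma cont_n_local: "cont_n n N f \<Longrightarrow> \<forall>y\<in>N. f y = g y \<Longrightarrow> cont_n n N g"
  unfolding cont_n_def by auto

lemma cont_n_nonzero:
  assumes "cont_n n N f" "z \<in> N" "f z \<noteq> 0"
  shows "\<exists>d>0. \<forall>w\<in>N \<inter> cube n z d. f w \<noteq> 0"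
proof -
  obtain d where d: "d > 0" "\<forall>w\<in>N. (\<forall>j\<in>{1..n}. \<bar>w j - z j\<bar> < d) \<longrightarrow> \<bar>f w - f z\<bar> < \<bar>f z\<bar>"
    using cont_nD[OF assms(1,2), of "\<bar>f z\<bar>"] assms(3) by auto
  show ?thesis
    by (rule exI[of _ d]) (use d in \<open>auto simp: cube_def\<close>)
qed

definition regular_at :: "nat \<Rightarrow> pt set \<Rightarrow> pt \<Rightarrow> (pt \<Rightarrow> real) \<Rightarrow> bool" where
  "regular_at n N z f \<longleftrightarrow> cont_n n N f \<and> (\<forall>i\<in>{1..n}. has_dpart i f z)"

lemma regular_at_diff: "regular_at n N z f \<Longrightarrow> regular_at n N z g \<Longrightarrow> regular_at n N z (\<lambda>y. f y - g y)"
  by (simp add: regular_at_def cont_n_diff dpart_diff)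

lemma regular_at_mult: "regular_at n N z f \<Longrightarrow> regular_at n N z g \<Longrightarrow> regular_at n N z (\<lambda>y. f y * g y)"
  by (simp add: regular_at_def cont_n_mult dpart_mult)

lemma regular_at_div: "regular_at n N z f \<Longrightarrow> regular_at n N z g \<Longrightarrow> \<forall>y\<in>N. g y \<noteq> 0 \<Longrightarrow> z \<in> N \<Longrightarrow> regular_at n N z (\<lambda>y. f y / g y)"
  by (simp add: regular_at_def cont_n_div dpart_div)

lemma regular_at_sum: "finite S \<Longrightarrow> \<forall>s\<in>S. regular_at n N z (f s) \<Longrightarrow> regular_at n N z (\<lambda>y. \<Sum>s\<in>S. f s y)"
  by (simp add: regular_at_def cont_n_sum dpart_sum)

lemma regular_at_mono: "regular_at n N z f \<Longrightarrow> M \<subseteq> N \<Longrightarrow> regular_at n M z f"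
  unfolding regular_at_def using cont_n_mono by blast

text \<open>\<open>smooth_on\<close> graded by the order of the derivatives, to allow induction on that order.\<close>
definition smooth_upto :: "nat \<Rightarrow> pt set \<Rightarrow> nat \<Rightarrow> (pt \<Rightarrow> real) \<Rightarrow> bool" where
  "smooth_upto n U k f \<longleftrightarrow> (\<forall>xs. set xs \<subseteq> {1..n} \<and> length xs \<le> k \<longrightarrow>
      cont_n n U (ipart xs f) \<and> (\<forall>i\<in>{1..n}. \<forall>z\<in>U. has_dpart i (ipart xs f) z))"

lemma smooth_on_iff_smooth_upto: "smooth_on n U f \<longleftrightarrow> (\<forall>k. smooth_upto n U k f)"
  unfolding smooth_on_def smooth_upto_def has_dpart_def by blast

lemma ipart_snoc: "ipart (xs @ [i]) f = ipart xs (dpart i f)"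
  by (induction xs) auto

lemma ipart_local:
  assumes "open_n n U" "\<forall>z\<in>U. f z = g z"
  shows "\<forall>z\<in>U. ipart xs f z = ipart xs g z"
proof (induction xs)
  case Nil then show ?case using assms by simp
next
  case (Cons i xs)
  show ?case using dpart_local_open(1)[OF assms(1) _ Cons] by simp
qed

lemma smooth_upto_local:
  assumes U: "open_n n U" and eq: "\<forall>z\<in>U. f z = g z" and s: "smooth_upto n U k f"
  shows "smooth_upto n U k g"
  unfolding smooth_upto_def
proof (intro allI impI conjI ballI)
  fix xs assume H: "set xs \<subseteq> {1..n} \<and> length xs \<le> k"
  have eqi: "\<forall>z\<in>U. ipart xs f z = ipart xs g z" by (rule ipart_local[OF U eq])
  show "cont_n n U (ipart xs g)" using s H eqi unfolding smooth_upto_def by (metis cont_n_local)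
  fix i z assume "i \<in> {1..n}" "z \<in> U"
  then show "has_dpart i (ipart xs g) z" using s H dpart_local_open(2)[OF U \<open>z \<in> U\<close> eqi] unfolding smooth_upto_def by blast
qed

lemma smooth_upto_mono: "smooth_upto n U k f \<Longrightarrow> k' \<le> k \<Longrightarrow> smooth_upto n U k' f"
  unfolding smooth_upto_def by auto

lemma smooth_upto_0: "smooth_upto n U 0 f \<longleftrightarrow> cont_n n U f \<and> (\<forall>i\<in>{1..n}. \<forall>z\<in>U. has_dpart i f z)"
  unfolding smooth_upto_def by auto

lemma smooth_upto_dpart: "smooth_upto n U (Suc k) f \<Longrightarrow> i0 \<in> {1..n} \<Longrightarrow> smooth_upto n U k (dpart i0 f)"
  unfolding smooth_upto_def
proof (intro allI impI)
  fix xs assume H: "\<forall>xs. set xs \<subseteq> {1..n} \<and> length xs \<le> Suc k \<longrightarrow>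
      cont_n n U (ipart xs f) \<and> (\<forall>i\<in>{1..n}. \<forall>z\<in>U. has_dpart i (ipart xs f) z)"
    and i: "i0 \<in> {1..n}" and hxs: "set xs \<subseteq> {1..n} \<and> length xs \<le> k"
  have A: "set (xs @ [i0]) \<subseteq> {1..n} \<and> length (xs @ [i0]) \<le> Suc k" using i hxs by auto
  show "cont_n n U (ipart xs (dpart i0 f)) \<and> (\<forall>i\<in>{1..n}. \<forall>z\<in>U. has_dpart i (ipart xs (dpart i0 f)) z)"
    using H[rule_format, OF A] by (simp add: ipart_snoc)
qed

lemma smooth_upto_SucI:
  assumes U: "open_n n U" and s0: "smooth_upto n U 0 f"
    and step: "\<And>i. i \<in> {1..n} \<Longrightarrow> smooth_upto n U k (dpart i f)"
  shows "smooth_upto n U (Suc k) f"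
  unfolding smooth_upto_def
proof (intro allI impI)
  fix xs assume hxs: "set xs \<subseteq> {1..n} \<and> length xs \<le> Suc k"
  show "cont_n n U (ipart xs f) \<and> (\<forall>i\<in>{1..n}. \<forall>z\<in>U. has_dpart i (ipart xs f) z)"
  proof (cases xs rule: rev_cases)
    case Nil then show ?thesis using s0 by (simp add: smooth_upto_0)
  next
    case (snoc xs' i)
    then have "i \<in> {1..n}" "set xs' \<subseteq> {1..n} \<and> length xs' \<le> k" using hxs by auto
    then show ?thesis using step[of i] unfolding smooth_upto_def snoc ipart_snoc by blast
  qed
qed

lemma smooth_upto_add:
  assumes U: "open_n n U"
  shows "smooth_upto n U k f \<Longrightarrow> smooth_upto n U k g \<Longrightarrow> smooth_upto n U k (\<lambda>y. f y + g y)"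
proof (induction k arbitrary: f g)
  case 0 then show ?case by (simp add: smooth_upto_0 cont_n_add dpart_add)
next
  case (Suc k)
  have f0: "smooth_upto n U 0 f" and g0: "smooth_upto n U 0 g" using Suc.prems smooth_upto_mono by blast+
  show ?case
  proof (rule smooth_upto_SucI[OF U])
    show "smooth_upto n U 0 (\<lambda>y. f y + g y)" using f0 g0 by (simp add: smooth_upto_0 cont_n_add dpart_add)
  next
    fix i assume i: "i \<in> {1..n}"
    have A: "smooth_upto n U k (\<lambda>y. dpart i f y + dpart i g y)"
      by (rule Suc.IH[OF smooth_upto_dpart[OF Suc.prems(1) i] smooth_upto_dpart[OF Suc.prems(2) i]])
    have B: "\<forall>z\<in>U. dpart i f z + dpart i g z = dpart i (\<lambda>y. f y + g y) z"
    proof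
      fix z assume z: "z \<in> U"
      have "has_dpart i f z" "has_dpart i g z" using f0 g0 i z unfolding smooth_upto_0 by blast+
      then show "dpart i f z + dpart i g z = dpart i (\<lambda>y. f y + g y) z" by (simp only: dpart_add(1))
    qed
    show "smooth_upto n U k (dpart i (\<lambda>y. f y + g y))"
      using smooth_upto_local[OF U B A] by simp
  qed
qed

lemma smooth_upto_mult:
  assumes U: "open_n n U"
  shows "smooth_upto n U k f \<Longrightarrow> smooth_upto n U k g \<Longrightarrow> smooth_upto n U k (\<lambda>y. f y * g y)"
proof (induction k arbitrary: f g)
  case 0 then show ?case by (simp add: smooth_upto_0 cont_n_mult dpart_mult)
next
  case (Suc k)
  have f0: "smooth_upto n U 0 f" and g0: "smooth_upto n U 0 g" using Suc.prems smooth_upto_mono by blast+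
  show ?case
  proof (rule smooth_upto_SucI[OF U])
    show "smooth_upto n U 0 (\<lambda>y. f y * g y)" using f0 g0 by (simp add: smooth_upto_0 cont_n_mult dpart_mult)
  next
    fix i assume i: "i \<in> {1..n}"
    have fk: "smooth_upto n U k f" and gk: "smooth_upto n U k g" using Suc.prems smooth_upto_mono by auto
    have A1: "smooth_upto n U k (\<lambda>y. dpart i f y * g y)" by (rule Suc.IH[OF smooth_upto_dpart[OF Suc.prems(1) i] gk])
    have A2: "smooth_upto n U k (\<lambda>y. f y * dpart i g y)" by (rule Suc.IH[OF fk smooth_upto_dpart[OF Suc.prems(2) i]])
    have A: "smooth_upto n U k (\<lambda>y. dpart i f y * g y + f y * dpart i g y)"
      by (rule smooth_upto_add[OF U A1 A2])
    have B: "\<forall>z\<in>U. dpart i f z * g z + f z * dpart i g z = dpart i (\<lambda>y. f y * g y) z"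
    proof
      fix z assume z: "z \<in> U"
      have "has_dpart i f z" "has_dpart i g z" using f0 g0 i z unfolding smooth_upto_0 by blast+
      then show "dpart i f z * g z + f z * dpart i g z = dpart i (\<lambda>y. f y * g y) z" by (simp only: dpart_mult(1))
    qed
    show "smooth_upto n U k (dpart i (\<lambda>y. f y * g y))"
      using smooth_upto_local[OF U B A] by simp
  qed
qed

lemma smooth_upto_const: "smooth_upto n U k (\<lambda>y. c)"
proof -
  have "\<And>xs. ipart xs (\<lambda>y. c) = (\<lambda>y. if xs = [] then c else 0)"
  proof -
    fix xs show "ipart xs (\<lambda>y. c) = (\<lambda>y. if xs = [] then c else 0)"
    proof (induction xs)
      case Nil then show ?case by simp
    next
      case (Cons a xs)
      have "ipart (a # xs) (\<lambda>y. c) = dpart a (\<lambda>y. if xs = [] then c else 0)"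
        by (simp only: ipart.simps Cons.IH)
      also have "\<dots> = (\<lambda>y. 0)" by (rule ext) (rule dpart_const(1))
      finally show ?case by simp
    qed
  qed
  then show ?thesis unfolding smooth_upto_def by (simp add: cont_n_const dpart_const)
qed

lemma smooth_upto_coord:
  assumes U: "open_n n U" and k: "m \<in> {1..n}"
  shows "smooth_upto n U k (\<lambda>y. y m)"
proof (cases k)
  case 0 then show ?thesis using k by (simp add: smooth_upto_0 cont_n_coord dpart_coord)
next
  case (Suc k')
  show ?thesis unfolding Suc
  proof (rule smooth_upto_SucI[OF U])
    show "smooth_upto n U 0 (\<lambda>y. y m)" using k by (simp add: smooth_upto_0 cont_n_coord dpart_coord)
    fix i show "smooth_upto n U k' (dpart i (\<lambda>y. y m))"
      unfolding dpart_coord by (rule smooth_upto_const)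
  qed
qed

lemma smooth_add: "open_n n U \<Longrightarrow> smooth_on n U f \<Longrightarrow> smooth_on n U g \<Longrightarrow> smooth_on n U (\<lambda>y. f y + g y)"
  unfolding smooth_on_iff_smooth_upto using smooth_upto_add by blast

lemma smooth_mult: "open_n n U \<Longrightarrow> smooth_on n U f \<Longrightarrow> smooth_on n U g \<Longrightarrow> smooth_on n U (\<lambda>y. f y * g y)"
  unfolding smooth_on_iff_smooth_upto using smooth_upto_mult by blast

lemma smooth_const: "smooth_on n U (\<lambda>y. c)"
  unfolding smooth_on_iff_smooth_upto using smooth_upto_const by blast

lemma smooth_coord: "open_n n U \<Longrightarrow> m \<in> {1..n} \<Longrightarrow> smooth_on n U (\<lambda>y. y m)"
  unfolding smooth_on_iff_smooth_upto using smooth_upto_coord by blast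

lemma smooth_dpart: "smooth_on n U f \<Longrightarrow> i \<in> {1..n} \<Longrightarrow> smooth_on n U (dpart i f)"
  unfolding smooth_on_iff_smooth_upto using smooth_upto_dpart by blast

lemma smooth_diff: "open_n n U \<Longrightarrow> smooth_on n U f \<Longrightarrow> smooth_on n U g \<Longrightarrow> smooth_on n U (\<lambda>y. f y - g y)"
proof -
  assume U: "open_n n U" and f: "smooth_on n U f" and g: "smooth_on n U g"
  have "smooth_on n U (\<lambda>y. f y + (-1) * g y)"
    by (rule smooth_add[OF U f smooth_mult[OF U smooth_const g]])
  then show ?thesis by simp
qed

lemma smooth_sum:
  assumes U: "open_n n U"
  shows "finite S \<Longrightarrow> \<forall>s\<in>S. smooth_on n U (f s) \<Longrightarrow> smooth_on n U (\<lambda>y. \<Sum>s\<in>S. f s y)"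
proof (induction S rule: finite_induct)
  case empty then show ?case by (simp add: smooth_const)
next
  case (insert s S)
  then show ?case using smooth_add[OF U, of "f s" "\<lambda>y. \<Sum>s\<in>S. f s y"] by simp
qed

lemma smooth_regular_at: "smooth_on n U f \<Longrightarrow> z \<in> U \<Longrightarrow> regular_at n U z f"
  unfolding smooth_on_iff_smooth_upto regular_at_def smooth_upto_0[symmetric] by (metis smooth_upto_0)

section \<open>Local frames with regular coefficients\<close>

lemma lie_leibniz:
  assumes fI: "finite I" and d: "d > 0"
    and eq: "\<forall>y\<in>cube n y0 d. \<forall>j\<in>{1..n}. u y j = (\<Sum>k\<in>I. c k y * F k y j)"
    and pc: "\<forall>k\<in>I. \<forall>i\<in>{1..n}. has_dpart i (c k) y0"
    and pF: "\<forall>k\<in>I. \<forall>i\<in>{1..n}. \<forall>j\<in>{1..n}. has_dpart i (\<lambda>y. F k y j) y0"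
    and j: "j \<in> {1..n}"
  shows "lie n a u y0 j =
    (\<Sum>k\<in>I. (\<Sum>i=1..n. a y0 i * dpart i (c k) y0) * F k y0 j + c k y0 * lie n a (F k) y0 j)"
proof -
  have y0: "y0 \<in> cube n y0 d" using d by (rule cube_center)
  have D: "dpart i (\<lambda>y. u y j) y0 =
      (\<Sum>k\<in>I. dpart i (c k) y0 * F k y0 j + c k y0 * dpart i (\<lambda>y. F k y j) y0)" if i: "i \<in> {1..n}" for i
  proof -
    have "dpart i (\<lambda>y. u y j) y0 = dpart i (\<lambda>y. \<Sum>k\<in>I. c k y * F k y j) y0"
      by (rule dpart_local(1)[OF d]) (use eq j in auto)
    also have "\<dots> = (\<Sum>k\<in>I. dpart i (\<lambda>y. c k y * F k y j) y0)"
      by (rule dpart_sum(1)[OF fI]) (use pc pF i j dpart_mult(2) in blast)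
    also have "\<dots> = (\<Sum>k\<in>I. dpart i (c k) y0 * F k y0 j + c k y0 * dpart i (\<lambda>y. F k y j) y0)"
      by (rule sum.cong[OF refl], rule dpart_mult(1)) (use pc pF i j in auto)
    finally show ?thesis .
  qed
  have U0: "u y0 i = (\<Sum>k\<in>I. c k y0 * F k y0 i)" if "i \<in> {1..n}" for i
    using eq y0 that by blast
  have "lie n a u y0 j = (\<Sum>i=1..n. a y0 i * dpart i (\<lambda>y. u y j) y0 - u y0 i * dpart i (\<lambda>y. a y j) y0)"
    by (simp add: lie_def)
  also have "\<dots> = (\<Sum>i=1..n. \<Sum>k\<in>I. a y0 i * dpart i (c k) y0 * F k y0 j
        + c k y0 * (a y0 i * dpart i (\<lambda>y. F k y j) y0 - F k y0 i * dpart i (\<lambda>y. a y j) y0))"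
  proof (rule sum.cong[OF refl])
    fix i assume i: "i \<in> {1..n}"
    show "a y0 i * dpart i (\<lambda>y. u y j) y0 - u y0 i * dpart i (\<lambda>y. a y j) y0 =
      (\<Sum>k\<in>I. a y0 i * dpart i (c k) y0 * F k y0 j
        + c k y0 * (a y0 i * dpart i (\<lambda>y. F k y j) y0 - F k y0 i * dpart i (\<lambda>y. a y j) y0))"
      unfolding D[OF i] U0[OF i]
      by (simp add: sum_distrib_left sum_distrib_right sum_subtractf[symmetric] sum.distrib[symmetric] algebra_simps)
  qed
  also have "\<dots> = (\<Sum>k\<in>I. \<Sum>i=1..n. a y0 i * dpart i (c k) y0 * F k y0 j
        + c k y0 * (a y0 i * dpart i (\<lambda>y. F k y j) y0 - F k y0 i * dpart i (\<lambda>y. a y j) y0))"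
    by (rule sum.swap)
  also have "\<dots> = (\<Sum>k\<in>I. (\<Sum>i=1..n. a y0 i * dpart i (c k) y0) * F k y0 j + c k y0 * lie n a (F k) y0 j)"
    by (rule sum.cong[OF refl]) (simp add: lie_def sum.distrib sum_distrib_left sum_distrib_right)
  finally show ?thesis .
qed
lemma elim_sum:
  fixes G :: "'a \<Rightarrow> nat \<Rightarrow> real"
  shows "(\<Sum>k\<in>I. c k * (G k j - G k j0 / G r j0 * G r j)) =
    (\<Sum>k\<in>I. c k * G k j) - (\<Sum>k\<in>I. c k * G k j0) / G r j0 * G r j"
  by (simp add: right_diff_distrib sum_subtractf sum_distrib_right sum_divide_distrib mult.assoc)

lemma iindep_nonzero_component:
  assumes ind: "iindep n G (insert r I)" and fI: "finite I"
  shows "\<exists>j0\<in>{1..n}. G r j0 \<noteq> 0"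
proof (rule ccontr)
  assume "\<not> ?thesis"
  then have z: "\<forall>j\<in>{1..n}. G r j = 0" by blast
  let ?c = "\<lambda>k. if k = r then 1 else (0::real)"
  have "\<forall>j\<in>{1..n}. (\<Sum>k\<in>insert r I. ?c k * G k j) = 0"
  proof
    fix j assume j: "j \<in> {1..n}"
    have "(\<Sum>k\<in>insert r I. ?c k * G k j) = (\<Sum>k\<in>insert r I. if k = r then G k j else 0)"
      by (rule sum.cong) auto
    also have "\<dots> = G r j" using fI by simp
    finally show "(\<Sum>k\<in>insert r I. ?c k * G k j) = 0" using z j by simp
  qed
  moreover have "(\<forall>j\<in>{1..n}. (\<Sum>k\<in>insert r I. ?c k * G k j) = 0) \<longrightarrow> (\<forall>k\<in>insert r I. ?c k = 0)"
    using ind unfolding iindep_def by (rule spec)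
  ultimately have "\<forall>k\<in>insert r I. ?c k = 0" by blast
  then have "?c r = 0" by blast
  then show False by simp
qed

lemma iindep_elim:
  assumes ind: "iindep n (\<lambda>k. F k y) (insert r I)" and fI: "finite I" and rI: "r \<notin> I"
    and j0: "j0 \<in> {1..n}"
  shows "iindep n (\<lambda>k. (\<lambda>j. F k y j - F k y j0 / F r y j0 * F r y j)) I"
  unfolding iindep_def
proof (intro allI impI)
  fix c assume s: "\<forall>j\<in>{1..n}. (\<Sum>k\<in>I. c k * (F k y j - F k y j0 / F r y j0 * F r y j)) = 0"
  let ?c = "c(r := - (\<Sum>k\<in>I. c k * F k y j0) / F r y j0)"
  have "\<forall>j\<in>{1..n}. (\<Sum>k\<in>insert r I. ?c k * F k y j) = 0"
  proof
    fix j assume j: "j \<in> {1..n}"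
    have e: "(\<Sum>k\<in>I. ?c k * F k y j) = (\<Sum>k\<in>I. c k * F k y j)"
      by (rule sum.cong) (use rI in auto)
    have "(\<Sum>k\<in>insert r I. ?c k * F k y j) = ?c r * F r y j + (\<Sum>k\<in>I. ?c k * F k y j)"
      using fI rI by simp
    also have "\<dots> = (\<Sum>k\<in>I. c k * F k y j) - (\<Sum>k\<in>I. c k * F k y j0) / F r y j0 * F r y j"
      unfolding e by simp
    also have "\<dots> = 0"
    proof -
      have H0: "(\<Sum>k\<in>I. c k * (F k y j - F k y j0 / F r y j0 * F r y j)) = 0" using s j by blast
      show ?thesis by (rule trans[OF elim_sum[symmetric] H0])
    qed
    finally show "(\<Sum>k\<in>insert r I. ?c k * F k y j) = 0" .
  qed
  moreover have "(\<forall>j\<in>{1..n}. (\<Sum>k\<in>insert r I. ?c k * F k y j) = 0) \<longrightarrow> (\<forall>k\<in>insert r I. ?c k = 0)"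
    using ind unfolding iindep_def by (rule spec)
  ultimately have "\<forall>k\<in>insert r I. ?c k = 0" by blast
  then show "\<forall>k\<in>I. c k = 0"
  proof (intro ballI)
    fix k assume A: "\<forall>k\<in>insert r I. ?c k = 0" and k: "k \<in> I"
    then have "?c k = 0" by blast
    moreover have "k \<noteq> r" using k rI by blast
    ultimately show "c k = 0" by simp
  qed
qed

lemma iindep_of_elim:
  assumes ind: "iindep n (\<lambda>k. (\<lambda>j. F k y j - F k y j0 / F r y j0 * F r y j)) I"
    and fI: "finite I" and rI: "r \<notin> I" and j0: "j0 \<in> {1..n}" and nz: "F r y j0 \<noteq> 0"
  shows "iindep n (\<lambda>k. F k y) (insert r I)"
  unfolding iindep_def
proof (intro allI impI)
  fix c assume s: "\<forall>j\<in>{1..n}. (\<Sum>k\<in>insert r I. c k * F k y j) = 0"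
  have s': "c r * F r y j + (\<Sum>k\<in>I. c k * F k y j) = 0" if "j \<in> {1..n}" for j
    using s that fI rI by simp
  have cr: "c r = - (\<Sum>k\<in>I. c k * F k y j0) / F r y j0"
    using s'[OF j0] nz by (simp add: field_simps)
  have "\<forall>j\<in>{1..n}. (\<Sum>k\<in>I. c k * (F k y j - F k y j0 / F r y j0 * F r y j)) = 0"
  proof
    fix j assume j: "j \<in> {1..n}"
    have "(\<Sum>k\<in>I. c k * (F k y j - F k y j0 / F r y j0 * F r y j)) =
      (\<Sum>k\<in>I. c k * F k y j) - (\<Sum>k\<in>I. c k * F k y j0) / F r y j0 * F r y j" by (rule elim_sum)
    also have "\<dots> = 0" using s'[OF j] cr by (simp add: algebra_simps)
    finally show "(\<Sum>k\<in>I. c k * (F k y j - F k y j0 / F r y j0 * F r y j)) = 0" .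
  qed
  then have cI: "\<forall>k\<in>I. c k = 0" using ind unfolding iindep_def by blast
  then have "(\<Sum>k\<in>I. c k * F k y j0) = 0" by simp
  then have "c r = 0" using cr by simp
  then show "\<forall>k\<in>insert r I. c k = 0" using cI by simp
qed

lemma ispan_elim:
  assumes x: "ispan n G (insert r I) x" and nz: "G r j0 \<noteq> 0"
    and I: "finite I" "r \<notin> I" and j0: "j0 \<in> {1..n}"
  shows "ispan n (\<lambda>k j. G k j - G k j0 / G r j0 * G r j) I (\<lambda>j. x j - x j0 / G r j0 * G r j)"
proof -
  obtain e where e: "\<forall>j\<in>{1..n}. x j = (\<Sum>k\<in>insert r I. e k * G k j)"
    using x unfolding ispan_def by blast
  have e': "x j = e r * G r j + (\<Sum>k\<in>I. e k * G k j)" if "j \<in> {1..n}" for j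
    using e that I by simp
  have "x j - x j0 / G r j0 * G r j = (\<Sum>k\<in>I. e k * (G k j - G k j0 / G r j0 * G r j))"
    if j: "j \<in> {1..n}" for j
    unfolding elim_sum e'[OF j] e'[OF j0] using nz by (simp add: field_simps)
  then show ?thesis unfolding ispan_def by blast
qed

lemma elim_back_subst:
  fixes G :: "'a \<Rightarrow> nat \<Rightarrow> real"
  assumes "x j - x j0 / G r j0 * G r j = (\<Sum>k\<in>I. c k * (G k j - G k j0 / G r j0 * G r j))"
  shows "x j = (x j0 - (\<Sum>k\<in>I. c k * G k j0)) / G r j0 * G r j + (\<Sum>k\<in>I. c k * G k j)"
proof -
  have "x j = x j0 / G r j0 * G r j + (\<Sum>k\<in>I. c k * G k j) - (\<Sum>k\<in>I. c k * G k j0) / G r j0 * G r j"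
    using assms unfolding elim_sum by linarith
  then show ?thesis by (simp add: diff_divide_distrib left_diff_distrib)
qed

lemma cube_nonzero_near:
  assumes "d > 0" "cont_n n (cube n y0 d) f" "f y0 \<noteq> 0"
  obtains d1 where "d1 > 0" "d1 \<le> d" "\<forall>w\<in>cube n y0 d1. f w \<noteq> 0"
proof -
  obtain e where e: "e > 0" "\<forall>w\<in>cube n y0 d \<inter> cube n y0 e. f w \<noteq> 0"
    using cont_n_nonzero[OF assms(2) cube_center[OF assms(1)] assms(3)] by blast
  show ?thesis by (rule that[of "min d e"]) (use e assms(1) in \<open>auto simp: cube_def\<close>)
qed

lemma iindep_near:
  assumes "finite I"
  shows "d > 0 \<Longrightarrow> \<forall>k\<in>I. \<forall>j\<in>{1..n}. cont_n n (cube n y0 d) (\<lambda>y. F k y j) \<Longrightarrow>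
    iindep n (\<lambda>k. F k y0) I \<Longrightarrow> \<exists>d'>0. d' \<le> d \<and> (\<forall>y\<in>cube n y0 d'. iindep n (\<lambda>k. F k y) I)"
  using assms
proof (induction I arbitrary: F d rule: finite_induct)
  case empty then show ?case by (intro exI[of _ d]) (auto simp: iindep_def)
next
  case (insert r I)
  obtain j0 where j0: "j0 \<in> {1..n}" "F r y0 j0 \<noteq> 0"
    using iindep_nonzero_component[OF insert.prems(3) insert.hyps(1)] by blast
  have "cont_n n (cube n y0 d) (\<lambda>y. F r y j0)" using insert.prems(2) j0(1) by blast
  then obtain d1 where d1: "d1 > 0" "d1 \<le> d" and nz: "\<forall>w\<in>cube n y0 d1. F r w j0 \<noteq> 0"
    using cube_nonzero_near[where f = "\<lambda>y. F r y j0", OF insert.prems(1) _ j0(2)] by blast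
  have sub: "cube n y0 d1 \<subseteq> cube n y0 d" by (rule cube_mono[OF d1(2)])
  define H where "H = (\<lambda>k y j. F k y j - F k y j0 / F r y j0 * F r y j)"
  have cH: "\<forall>k\<in>I. \<forall>j\<in>{1..n}. cont_n n (cube n y0 d1) (\<lambda>y. H k y j)"
  proof (intro ballI)
    fix k j assume k: "k \<in> I" and j: "j \<in> {1..n}"
    have c1: "cont_n n (cube n y0 d1) (\<lambda>y. F k y j)" "cont_n n (cube n y0 d1) (\<lambda>y. F k y j0)"
      "cont_n n (cube n y0 d1) (\<lambda>y. F r y j)" "cont_n n (cube n y0 d1) (\<lambda>y. F r y j0)"
      using insert.prems(2) k j j0(1) cont_n_mono[OF _ sub] by blast+
    show "cont_n n (cube n y0 d1) (\<lambda>y. H k y j)" unfolding H_def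
      by (intro cont_n_diff cont_n_mult cont_n_div c1 nz)
  qed
  have iH: "iindep n (\<lambda>k. H k y0) I" unfolding H_def
    by (rule iindep_elim[OF insert.prems(3) insert.hyps(1,2) j0(1)])
  obtain d2 where d2: "d2 > 0" "d2 \<le> d1" "\<forall>y\<in>cube n y0 d2. iindep n (\<lambda>k. H k y) I"
    using insert.IH[OF d1(1) cH iH] by blast
  show ?case
  proof (intro exI[of _ d2] conjI ballI)
    show "d2 > 0" "d2 \<le> d" using d2 d1 by auto
    fix y assume y: "y \<in> cube n y0 d2"
    have yn: "F r y j0 \<noteq> 0" using nz y cube_mono[OF d2(2)] by blast
    show "iindep n (\<lambda>k. F k y) (insert r I)"
      by (rule iindep_of_elim[where F=F and y=y and r=r and I=I, OF _ insert.hyps(1,2) j0(1) yn]) (use d2(3) y in \<open>simp add: H_def\<close>)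
  qed
qed

lemma regular_coefficients_insert:
  assumes I: "finite I" "r \<notin> I" and j0: "j0 \<in> {1..n}" and d: "d > 0"
    and rF: "\<forall>k\<in>insert r I. \<forall>j\<in>{1..n}. regular_at n (cube n y0 d) y0 (\<lambda>y. F k y j)"
    and ru: "\<forall>j\<in>{1..n}. regular_at n (cube n y0 d) y0 (\<lambda>y. u y j)"
    and nz: "\<forall>y\<in>cube n y0 d. F r y j0 \<noteq> 0"
    and rc: "\<forall>k\<in>I. regular_at n (cube n y0 d) y0 (c k)"
    and ceq: "\<forall>y\<in>cube n y0 d. \<forall>j\<in>{1..n}. u y j - u y j0 / F r y j0 * F r y j
                = (\<Sum>k\<in>I. c k y * (F k y j - F k y j0 / F r y j0 * F r y j))"
  shows "\<exists>c'. (\<forall>k\<in>insert r I. regular_at n (cube n y0 d) y0 (c' k)) \<and>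
    (\<forall>y\<in>cube n y0 d. \<forall>j\<in>{1..n}. u y j = (\<Sum>k\<in>insert r I. c' k y * F k y j))"
proof (intro exI conjI ballI)
  let ?c' = "c(r := (\<lambda>y. (u y j0 - (\<Sum>k\<in>I. c k y * F k y j0)) / F r y j0))"
  have y0: "y0 \<in> cube n y0 d" using d by (rule cube_center)
  fix k assume k: "k \<in> insert r I"
  show "regular_at n (cube n y0 d) y0 (?c' k)"
  proof (cases "k = r")
    case True
    have "regular_at n (cube n y0 d) y0 (\<lambda>y. (u y j0 - (\<Sum>k\<in>I. c k y * F k y j0)) / F r y j0)"
      by (intro regular_at_div regular_at_diff regular_at_sum regular_at_mult ballI y0)
        (use I j0 rF ru rc nz in auto)
    then show ?thesis using True by simp
  next
    case False
    then show ?thesis using rc k by simp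
  qed
next
  let ?c' = "c(r := (\<lambda>y. (u y j0 - (\<Sum>k\<in>I. c k y * F k y j0)) / F r y j0))"
  fix y j assume y: "y \<in> cube n y0 d" and j: "j \<in> {1..n}"
  have sI: "(\<Sum>k\<in>I. ?c' k y * F k y j) = (\<Sum>k\<in>I. c k y * F k y j)"
    by (rule sum.cong) (use I(2) in auto)
  have "u y j = (u y j0 - (\<Sum>k\<in>I. c k y * F k y j0)) / F r y j0 * F r y j + (\<Sum>k\<in>I. c k y * F k y j)"
    using ceq y j by (intro elim_back_subst[where x = "u y" and G = "\<lambda>k. F k y" and c = "\<lambda>k. c k y"]) simp
  also have "\<dots> = (\<Sum>k\<in>insert r I. ?c' k y * F k y j)"
    using I sI by simp
  finally show "u y j = (\<Sum>k\<in>insert r I. ?c' k y * F k y j)" .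
qed

text \<open>Gaussian elimination on a component \<open>j0\<close> with \<open>F r y0 j0 \<noteq> 0\<close>, which stays nonzero
  near \<open>y0\<close>, removes one generator while keeping the coefficients regular.\<close>
lemma regular_coefficients_near:
  assumes "finite I"
  shows "d > 0 \<Longrightarrow> \<forall>k\<in>I. \<forall>j\<in>{1..n}. regular_at n (cube n y0 d) y0 (\<lambda>y. F k y j) \<Longrightarrow>
    \<forall>j\<in>{1..n}. regular_at n (cube n y0 d) y0 (\<lambda>y. u y j) \<Longrightarrow>
    iindep n (\<lambda>k. F k y0) I \<Longrightarrow> \<forall>y\<in>cube n y0 d. ispan n (\<lambda>k. F k y) I (u y) \<Longrightarrow>
    \<exists>d'>0. d' \<le> d \<and> (\<exists>c. (\<forall>k\<in>I. regular_at n (cube n y0 d') y0 (c k)) \<and>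
       (\<forall>y\<in>cube n y0 d'. \<forall>j\<in>{1..n}. u y j = (\<Sum>k\<in>I. c k y * F k y j)))"
  using assms
proof (induction I arbitrary: F u d rule: finite_induct)
  case empty
  show ?case
  proof (intro exI[of _ d] conjI exI[of _ "\<lambda>k y. 0"] ballI)
    show "d > 0" "d \<le> d" using empty by auto
  next
    fix y j assume "y \<in> cube n y0 d" "j \<in> {1..n}"
    then show "u y j = (\<Sum>k\<in>{}. 0 * F k y j)" using empty.prems(5) by (simp add: ispan_def)
  qed simp
next
  case (insert r I)
  obtain j0 where j0: "j0 \<in> {1..n}" "F r y0 j0 \<noteq> 0"
    using iindep_nonzero_component[OF insert.prems(4) insert.hyps(1)] by blast
  have "cont_n n (cube n y0 d) (\<lambda>y. F r y j0)"
    using insert.prems(2) j0(1) unfolding regular_at_def by blast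
  then obtain d1 where d1: "d1 > 0" "d1 \<le> d" and nz: "\<forall>w\<in>cube n y0 d1. F r w j0 \<noteq> 0"
    using cube_nonzero_near[where f = "\<lambda>y. F r y j0", OF insert.prems(1) _ j0(2)] by blast
  have sub: "cube n y0 d1 \<subseteq> cube n y0 d" by (rule cube_mono[OF d1(2)])
  have y0c: "y0 \<in> cube n y0 d1" using d1(1) by (rule cube_center)
  define H where "H = (\<lambda>k y j. F k y j - F k y j0 / F r y j0 * F r y j)"
  define u' where "u' = (\<lambda>y j. u y j - u y j0 / F r y j0 * F r y j)"
  have rF: "regular_at n (cube n y0 d1) y0 (\<lambda>y. F k y j)" if "k \<in> insert r I" "j \<in> {1..n}" for k j
    using insert.prems(2) that regular_at_mono[OF _ sub] by blast
  have ru: "regular_at n (cube n y0 d1) y0 (\<lambda>y. u y j)" if "j \<in> {1..n}" for j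
    using insert.prems(3) that regular_at_mono[OF _ sub] by blast
  have rH: "\<forall>k\<in>I. \<forall>j\<in>{1..n}. regular_at n (cube n y0 d1) y0 (\<lambda>y. H k y j)"
    unfolding H_def by (intro ballI regular_at_diff regular_at_mult regular_at_div rF nz y0c j0(1)) auto
  have ru': "\<forall>j\<in>{1..n}. regular_at n (cube n y0 d1) y0 (\<lambda>y. u' y j)"
    unfolding u'_def by (intro ballI regular_at_diff regular_at_mult regular_at_div rF ru nz y0c j0(1)) auto
  have iH: "iindep n (\<lambda>k. H k y0) I" unfolding H_def
    by (rule iindep_elim[OF insert.prems(4) insert.hyps(1,2) j0(1)])
  have sH: "\<forall>y\<in>cube n y0 d1. ispan n (\<lambda>k. H k y) I (u' y)"
  proof
    fix y assume y: "y \<in> cube n y0 d1"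
    show "ispan n (\<lambda>k. H k y) I (u' y)" unfolding H_def u'_def
      by (rule ispan_elim[OF _ _ insert.hyps(1,2) j0(1)]) (use insert.prems(5) sub nz y in blast)+
  qed
  obtain d2 c where d2: "d2 > 0" "d2 \<le> d1" and rc: "\<forall>k\<in>I. regular_at n (cube n y0 d2) y0 (c k)"
    and ceq: "\<forall>y\<in>cube n y0 d2. \<forall>j\<in>{1..n}. u' y j = (\<Sum>k\<in>I. c k y * H k y j)"
    using insert.IH[OF d1(1) rH ru' iH sH] by blast
  have sub2: "cube n y0 d2 \<subseteq> cube n y0 d1" by (rule cube_mono[OF d2(2)])
  have "\<exists>c'. (\<forall>k\<in>insert r I. regular_at n (cube n y0 d2) y0 (c' k)) \<and>
    (\<forall>y\<in>cube n y0 d2. \<forall>j\<in>{1..n}. u y j = (\<Sum>k\<in>insert r I. c' k y * F k y j))"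
  proof (rule regular_coefficients_insert[OF insert.hyps(1,2) j0(1) d2(1) _ _ _ rc])
    show "\<forall>k\<in>insert r I. \<forall>j\<in>{1..n}. regular_at n (cube n y0 d2) y0 (\<lambda>y. F k y j)"
      using rF regular_at_mono[OF _ sub2] by blast
    show "\<forall>j\<in>{1..n}. regular_at n (cube n y0 d2) y0 (\<lambda>y. u y j)"
      using ru regular_at_mono[OF _ sub2] by blast
    show "\<forall>y\<in>cube n y0 d2. F r y j0 \<noteq> 0" using nz sub2 by blast
    show "\<forall>y\<in>cube n y0 d2. \<forall>j\<in>{1..n}. u y j - u y j0 / F r y j0 * F r y j
        = (\<Sum>k\<in>I. c k y * (F k y j - F k y j0 / F r y j0 * F r y j))"
      using ceq by (simp add: H_def u'_def)
  qed
  then show ?case using d2 d1 by (meson order_trans)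
qed

section \<open>Persistence of a rank deficiency\<close>

lemma regular_representation_of_constant_rank:
  assumes U: "open_n n U" "y0 \<in> U"
    and sm: "\<forall>g\<in>set M \<union> {u}. smooth_vf n U g"
    and rk: "\<forall>y\<in>U. rank_n n (dval (M @ [u]) y) \<le> rank_n n (dval M y0)"
  obtains I d c where "I \<subseteq> {..<length M}" "d > 0"
    "\<forall>k\<in>I. regular_at n (cube n y0 d) y0 (c k)"
    "\<forall>k\<in>I. \<forall>j\<in>{1..n}. regular_at n (cube n y0 d) y0 (\<lambda>y. (M ! k) y j)"
    "\<forall>y\<in>cube n y0 d. \<forall>j\<in>{1..n}. u y j = (\<Sum>k\<in>I. c k y * (M ! k) y j)"
proof -
  obtain I where I: "I \<subseteq> {..<length M}" "iindep n (nth (dval M y0)) I"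
    "card I = rank_n n (dval M y0)"
    using rank_n_witness[of "dval M y0" n] by (auto simp: length_dval)
  have eq0: "\<forall>k\<in>I. dval M y0 ! k = (M ! k) y0" using I(1) by (auto simp: dval_nth)
  have indI: "iindep n (\<lambda>k. (M ! k) y0) I" using I(2) iindep_cong[OF eq0] by simp
  have fI: "finite I" using I(1) finite_subset by blast
  obtain d0 where d0: "d0 > 0" "cube n y0 d0 \<subseteq> U" using open_n_cube[OF U] by blast
  have reg: "regular_at n (cube n y0 d) y0 (\<lambda>y. g y j)"
    if "g \<in> set M \<union> {u}" "j \<in> {1..n}" "d \<le> d0" for g j d
  proof (rule regular_at_mono)
    show "regular_at n U y0 (\<lambda>y. g y j)"
      by (rule smooth_regular_at[OF _ U(2)]) (use sm that in \<open>auto simp: smooth_vf_def\<close>)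
    show "cube n y0 d \<subseteq> U" using d0(2) cube_mono[OF that(3)] by blast
  qed
  have regM: "regular_at n (cube n y0 d) y0 (\<lambda>y. (M ! k) y j)"
    if "k \<in> I" "j \<in> {1..n}" "d \<le> d0" for k j d
    using reg[OF _ that(2,3)] that(1) I(1) by auto
  obtain d1 where d1: "d1 > 0" "d1 \<le> d0" "\<forall>y\<in>cube n y0 d1. iindep n (\<lambda>k. (M ! k) y) I"
    using iindep_near[OF fI d0(1), of n y0 "\<lambda>k y j. (M ! k) y j"] regM[OF _ _ order_refl] indI
    unfolding regular_at_def by auto
  have sp: "ispan n (\<lambda>k. (M ! k) y) I (u y)" if y: "y \<in> cube n y0 d1" for y
  proof -
    have eq: "\<forall>k\<in>I. dval M y ! k = (M ! k) y" using I(1) by (auto simp: dval_nth)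
    have "ispan n (nth (dval M y)) I (u y)"
    proof (rule ispan_of_rank_le_card)
      show "I \<subseteq> {..<length (dval M y)}" using I(1) by (simp add: length_dval)
      show "iindep n (nth (dval M y)) I" using d1(3) y iindep_cong[OF eq] by simp
      have "y \<in> U" using y d0(2) cube_mono[OF d1(2)] by blast
      then show "rank_n n (dval M y @ [u y]) \<le> card I" using rk I(3) by (simp add: dval_append dval_def)
    qed
    then show ?thesis using ispan_cong_F[OF eq] by simp
  qed
  obtain d2 c where d2: "d2 > 0" "d2 \<le> d1"
    and rc: "\<forall>k\<in>I. regular_at n (cube n y0 d2) y0 (c k)"
    and ceq: "\<forall>y\<in>cube n y0 d2. \<forall>j\<in>{1..n}. u y j = (\<Sum>k\<in>I. c k y * (M ! k) y j)"
    using regular_coefficients_near[OF fI d1(1), of n y0 "\<lambda>k y j. (M ! k) y j" u]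
      regM[OF _ _ d1(2)] reg[OF _ _ d1(2)] indI sp by auto
  have "d2 \<le> d0" using d1(2) d2(2) by simp
  then have "\<forall>k\<in>I. \<forall>j\<in>{1..n}. regular_at n (cube n y0 d2) y0 (\<lambda>y. (M ! k) y j)"
    using regM by blast
  then show ?thesis by (rule that[OF I(1) d2(1) rc _ ceq])
qed

lemma lie_in_span_of_constant_rank:
  assumes U: "open_n n U" "y0 \<in> U"
    and sm: "\<forall>g\<in>set M \<union> {u}. smooth_vf n U g"
    and rk: "\<forall>y\<in>U. rank_n n (dval (M @ [u]) y) \<le> rank_n n (dval M y0)"
  shows "in_span n (dval M y0 @ map (\<lambda>g. lie n a g y0) M) (lie n a u y0)"
proof -
  obtain I d c where I: "I \<subseteq> {..<length M}" and d: "d > 0"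
    and rc: "\<forall>k\<in>I. regular_at n (cube n y0 d) y0 (c k)"
    and rM: "\<forall>k\<in>I. \<forall>j\<in>{1..n}. regular_at n (cube n y0 d) y0 (\<lambda>y. (M ! k) y j)"
    and ceq: "\<forall>y\<in>cube n y0 d. \<forall>j\<in>{1..n}. u y j = (\<Sum>k\<in>I. c k y * (M ! k) y j)"
    by (rule regular_representation_of_constant_rank[OF U sm rk])
  have fI: "finite I" using I finite_subset by blast
  let ?T = "dval M y0 @ map (\<lambda>g. lie n a g y0) M"
  have "in_span n ?T (\<lambda>j. \<Sum>k\<in>I. (\<Sum>i=1..n. a y0 i * dpart i (c k) y0) * (M ! k) y0 j
      + c k y0 * lie n a (M ! k) y0 j)"
  proof (rule in_span_sum[OF fI], intro ballI)
    fix k assume "k \<in> I"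
    then have "M ! k \<in> set M" using I by auto
    then have A: "in_span n ?T ((M ! k) y0)" and B: "in_span n ?T (lie n a (M ! k) y0)"
      by (auto intro!: in_span_mem simp: set_dval)
    show "in_span n ?T (\<lambda>j. (\<Sum>i=1..n. a y0 i * dpart i (c k) y0) * (M ! k) y0 j
      + c k y0 * lie n a (M ! k) y0 j)"
      by (rule in_span_add[OF in_span_scale[OF A] in_span_scale[OF B]])
  qed
  moreover have "lie n a u y0 j = (\<Sum>k\<in>I. (\<Sum>i=1..n. a y0 i * dpart i (c k) y0) * (M ! k) y0 j
      + c k y0 * lie n a (M ! k) y0 j)" if "j \<in> {1..n}" for j
  proof (rule lie_leibniz[OF fI d ceq _ _ that])
    show "\<forall>k\<in>I. \<forall>i\<in>{1..n}. has_dpart i (c k) y0" using rc unfolding regular_at_def by blast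
    show "\<forall>k\<in>I. \<forall>i\<in>{1..n}. \<forall>j\<in>{1..n}. has_dpart i (\<lambda>y. (M ! k) y j) y0"
      using rM unfolding regular_at_def by blast
  qed
  ultimately show ?thesis by (subst in_span_cong) auto
qed

lemma rank_increment_step:
  assumes U: "open_n n U" "y0 \<in> U"
    and sm: "\<forall>g\<in>set L \<union> {w, u}. smooth_vf n U g"
    and cl: "\<forall>g\<in>set L. lie n a g \<in> set L \<union> {w, u}"
    and cst: "\<forall>y\<in>U. rank_n n (dval (L @ [w, u]) y) = rank_n n (dval (L @ [w, u]) y0)"
    and dep: "in_span n (dval (L @ [w]) y0) (u y0)"
  shows "rank_n n (dval (L @ [w, u, lie n a w, lie n a u]) y0) \<le> rank_n n (dval (L @ [w, u]) y0) + 1"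
proof -
  let ?T = "dval (L @ [w, u]) y0 @ [lie n a w y0]"
  have "rank_n n (dval (L @ [w]) y0) = rank_n n (dval (L @ [w, u]) y0)"
    by (intro rank_same_span) (use dep in \<open>auto simp: dval_def intro: in_span_mem\<close>)
  then have "in_span n (dval (L @ [w]) y0 @ map (\<lambda>g. lie n a g y0) (L @ [w])) (lie n a u y0)"
    using cst sm by (intro lie_in_span_of_constant_rank[OF U]) auto
  moreover have "\<forall>v\<in>set (dval (L @ [w]) y0 @ map (\<lambda>g. lie n a g y0) (L @ [w])). in_span n ?T v"
    using cl by (auto intro!: in_span_mem simp: set_dval)
  ultimately have "in_span n ?T (lie n a u y0)" by (rule in_span_trans)
  then have "rank_n n (dval (L @ [w, u, lie n a w, lie n a u]) y0) \<le> rank_n n ?T"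
    by (intro rank_mono_span) (auto intro!: in_span_mem simp: dval_def)
  also have "\<dots> \<le> rank_n n (dval (L @ [w, u]) y0) + 1" by (rule rank_snoc)
  finally show ?thesis .
qed

text \<open>Once the rank grows by at most one from \<open>L\<close> to \<open>L + {w, u}\<close>, one of \<open>w, u\<close> depends on
  \<open>L\<close> and the other one at \<open>y0\<close>; by symmetry this is \<open>u\<close>.\<close>
lemma rank_increment_le_one_persists:
  assumes U: "open_n n U" "y0 \<in> U"
    and sm: "\<forall>g\<in>set L \<union> {w, u}. smooth_vf n U g"
    and cl: "\<forall>g\<in>set L. lie n a g \<in> set L \<union> {w, u}"
    and cst: "\<forall>y\<in>U. rank_n n (dval (L @ [w, u]) y) = rank_n n (dval (L @ [w, u]) y0)"
    and inc: "rank_n n (dval (L @ [w, u]) y0) \<le> rank_n n (dval L y0) + 1"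
  shows "rank_n n (dval (L @ [w, u, lie n a w, lie n a u]) y0) \<le> rank_n n (dval (L @ [w, u]) y0) + 1"
proof (cases "in_span n (dval (L @ [w]) y0) (u y0)")
  case True
  then show ?thesis by (rule rank_increment_step[OF U sm cl cst])
next
  case False
  have "rank_n n (dval (L @ [w]) y0) + 1 \<le> rank_n n (dval (L @ [w, u]) y0)"
    using rank_snoc_strict[OF False] by (simp add: dval_def)
  then have "in_span n (dval L y0) (w y0)"
    using rank_snoc_strict[of n "dval L y0" "w y0"] inc by (force simp: dval_def)
  then have dep: "in_span n (dval (L @ [u]) y0) (w y0)"
    by (rule in_span_mono[rotated]) (auto simp: dval_def)
  have swap: "set (L @ [u, w]) = set (L @ [w, u])"
    "set (L @ [u, w, lie n a u, lie n a w]) = set (L @ [w, u, lie n a w, lie n a u])" by auto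
  have cst': "\<forall>y\<in>U. rank_n n (dval (L @ [u, w]) y) = rank_n n (dval (L @ [u, w]) y0)"
    using cst unfolding rank_dval_set_cong[OF swap(1)] .
  have "rank_n n (dval (L @ [u, w, lie n a u, lie n a w]) y0) \<le> rank_n n (dval (L @ [u, w]) y0) + 1"
    by (rule rank_increment_step[OF U _ _ cst' dep]) (use sm cl in auto)
  then show ?thesis unfolding rank_dval_set_cong[OF swap(1)] rank_dval_set_cong[OF swap(2)] .
qed

lemma Dseq_Suc_set:
  "set (Dseq n a b1 b2 (Suc j)) = set (Dseq n a b1 b2 j) \<union> {ad_pow n a j b1, ad_pow n a j b2}"
proof -
  have "set (Dseq n a b1 b2 (Suc j)) = set (Dseq n a b1 b2 j) \<union> {ad_pow n a j b1, ad_pow n a j b2}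
    \<and> lie n a ` set (Dseq n a b1 b2 j) \<subseteq> set (Dseq n a b1 b2 (Suc j))"
  proof (induction j)
    case 0
    show ?case by simp
  next
    case (Suc j)
    have "set (Dseq n a b1 b2 (Suc (Suc j)))
        = set (Dseq n a b1 b2 (Suc j)) \<union> lie n a ` set (Dseq n a b1 b2 (Suc j))"
      by simp
    then show ?case using Suc.IH by auto
  qed
  then show ?thesis ..
qed

lemma Dseq_lie_closed: "g \<in> set (Dseq n a b1 b2 j) \<Longrightarrow> lie n a g \<in> set (Dseq n a b1 b2 (Suc j))"
  by (cases j) auto

declare Dseq.simps(2)[simp del]

lemma Dseq_mono: "j \<le> j' \<Longrightarrow> set (Dseq n a b1 b2 j) \<subseteq> set (Dseq n a b1 b2 j')"
  by (rule lift_Suc_mono_le[of "\<lambda>j. set (Dseq n a b1 b2 j)"]) (auto simp: Dseq_Suc_set)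

lemma in_span_Dseq_mono:
  assumes "j \<le> j'" "in_span n (dval (Dseq n a b1 b2 j) y) x"
  shows "in_span n (dval (Dseq n a b1 b2 j') y) x"
  by (rule in_span_mono[OF _ assms(2)]) (simp add: set_dval image_mono Dseq_mono[OF assms(1)])

lemma smooth_lie:
  assumes U: "open_n n U" and "smooth_vf n U v" "smooth_vf n U w"
  shows "smooth_vf n U (lie n v w)"
  unfolding smooth_vf_def lie_def
  by (intro ballI smooth_sum[OF U]) (use assms in \<open>auto intro!: smooth_diff[OF U] smooth_mult[OF U] smooth_dpart simp: smooth_vf_def\<close>)

lemma smooth_Dseq:
  assumes "open_n n U" "smooth_vf n U a" "smooth_vf n U b1" "smooth_vf n U b2"
    and "g \<in> set (Dseq n a b1 b2 i)"
  shows "smooth_vf n U g"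
  using assms(5)
proof (induction i arbitrary: g)
  case 0
  then show ?case by simp
next
  case (Suc i)
  have "smooth_vf n U (ad_pow n a m b)" if "smooth_vf n U b" for b m
    using that by (induction m) (simp_all add: smooth_lie assms(1,2))
  then show ?case using Suc assms(3,4) by (auto simp: Dseq_Suc_set)
qed

lemma Dseq_rank_Suc_le:
  assumes "in_span n (dval (Dseq n a b1 b2 j) y) (ad_pow n a j b2 y)"
  shows "rank_n n (dval (Dseq n a b1 b2 (Suc j)) y) \<le> rank_n n (dval (Dseq n a b1 b2 j) y) + 1"
proof -
  let ?L = "dval (Dseq n a b1 b2 j) y @ [ad_pow n a j b1 y]"
  have "in_span n ?L (ad_pow n a j b2 y)"
    by (rule in_span_mono[OF _ assms]) auto
  then have "rank_n n (dval (Dseq n a b1 b2 (Suc j)) y) \<le> rank_n n ?L"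
    by (intro rank_mono_span) (auto simp: dval_def Dseq_Suc_set intro: in_span_mem)
  also have "\<dots> \<le> rank_n n (dval (Dseq n a b1 b2 j) y) + 1" by (rule rank_snoc)
  finally show ?thesis .
qed

lemma Dseq_rank_increment_persists:
  assumes U: "open_n n U" "y0 \<in> U"
    and sm: "smooth_vf n U a" "smooth_vf n U b1" "smooth_vf n U b2"
    and cst: "\<forall>y\<in>U. rank_n n (dval (Dseq n a b1 b2 (Suc j)) y) = rank_n n (dval (Dseq n a b1 b2 (Suc j)) y0)"
    and inc: "rank_n n (dval (Dseq n a b1 b2 (Suc j)) y0) \<le> rank_n n (dval (Dseq n a b1 b2 j) y0) + 1"
  shows "rank_n n (dval (Dseq n a b1 b2 (Suc (Suc j))) y0) \<le> rank_n n (dval (Dseq n a b1 b2 (Suc j)) y0) + 1"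
proof -
  let ?L = "Dseq n a b1 b2 j" and ?w = "ad_pow n a j b1" and ?u = "ad_pow n a j b2"
  have S1: "set (Dseq n a b1 b2 (Suc j)) = set (?L @ [?w, ?u])"
    by (auto simp: Dseq_Suc_set)
  have S2: "set (Dseq n a b1 b2 (Suc (Suc j))) = set (?L @ [?w, ?u, lie n a ?w, lie n a ?u])"
    by (auto simp: Dseq_Suc_set)
  have "rank_n n (dval (?L @ [?w, ?u, lie n a ?w, lie n a ?u]) y0) \<le> rank_n n (dval (?L @ [?w, ?u]) y0) + 1"
  proof (rule rank_increment_le_one_persists[OF U])
    show "\<forall>g\<in>set ?L \<union> {?w, ?u}. smooth_vf n U g"
    proof
      fix g assume "g \<in> set ?L \<union> {?w, ?u}"
      then have "g \<in> set (Dseq n a b1 b2 (Suc j))" using S1 by simp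
      then show "smooth_vf n U g" by (rule smooth_Dseq[OF U(1) sm])
    qed
    show "\<forall>g\<in>set ?L. lie n a g \<in> set ?L \<union> {?w, ?u}"
    proof
      fix g assume "g \<in> set ?L"
      then have "lie n a g \<in> set (Dseq n a b1 b2 (Suc j))" by (rule Dseq_lie_closed)
      then show "lie n a g \<in> set ?L \<union> {?w, ?u}" using S1 by simp
    qed
    show "\<forall>y\<in>U. rank_n n (dval (?L @ [?w, ?u]) y) = rank_n n (dval (?L @ [?w, ?u]) y0)"
      using cst unfolding rank_dval_set_cong[OF S1] .
    show "rank_n n (dval (?L @ [?w, ?u]) y0) \<le> rank_n n (dval ?L y0) + 1"
      using inc unfolding rank_dval_set_cong[OF S1] .
  qed
  then show ?thesis unfolding rank_dval_set_cong[OF S1] rank_dval_set_cong[OF S2] .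
qed

section \<open>Triangular fields and fields supported in the last coordinates\<close>

definition triangular_vf :: "nat \<Rightarrow> vfield \<Rightarrow> bool" where
  "triangular_vf n V \<longleftrightarrow> (\<forall>j\<in>{1..n}. \<forall>i. j + 1 < i \<longrightarrow> (\<forall>y t. V (y(i := t)) j = V y j))"

definition supported_last :: "nat \<Rightarrow> nat \<Rightarrow> vfield \<Rightarrow> bool" where
  "supported_last n q X \<longleftrightarrow> (\<forall>y. \<forall>j\<in>{1..n}. j + q \<le> n \<longrightarrow> X y j = 0)"

definition spans_last_coords :: "nat \<Rightarrow> nat \<Rightarrow> (nat \<Rightarrow> real) list \<Rightarrow> bool" where
  "spans_last_coords n q L \<longleftrightarrow> (\<forall>j\<in>{1..n}. n < j + q \<longrightarrow> (\<forall>y. in_span n L (coord_vf j y)))"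

lemma dpart_zero: "(\<forall>y. f y = 0) \<Longrightarrow> dpart i f z = 0"
proof -
  assume "\<forall>y. f y = 0"
  then have "f = (\<lambda>y. 0)" by auto
  then show ?thesis by (simp add: dpart_const)
qed

lemma triangular_vf_dpart:
  assumes "triangular_vf n V" "j \<in> {1..n}" "j + 1 < i"
  shows "dpart i (\<lambda>y. V y j) z = 0"
  using assms unfolding triangular_vf_def by (intro dpart_const_line(1)) auto

lemma lie_supported_last:
  assumes V: "triangular_vf n V" and X: "supported_last n q X"
  shows "supported_last n (Suc q) (lie n V X)"
  unfolding supported_last_def
proof (intro allI ballI impI)
  fix y j assume j: "j \<in> {1..n}" and jq: "j + Suc q \<le> n"
  have "lie n V X y j = (\<Sum>i=1..n. V y i * dpart i (\<lambda>y. X y j) y - X y i * dpart i (\<lambda>y. V y j) y)"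
    by (simp add: lie_def)
  also have "\<dots> = (\<Sum>i=1..n. 0)"
  proof (rule sum.cong[OF refl])
    fix i assume i: "i \<in> {1..n}"
    have "dpart i (\<lambda>y. X y j) y = 0" using X j jq by (intro dpart_zero) (auto simp: supported_last_def)
    moreover have "X y i * dpart i (\<lambda>y. V y j) y = 0"
    proof (cases "i + q \<le> n")
      case True then show ?thesis using X i by (simp add: supported_last_def)
    next
      case False then have "j + 1 < i" using jq by simp
      then show ?thesis using triangular_vf_dpart[OF V j] by simp
    qed
    ultimately show "V y i * dpart i (\<lambda>y. X y j) y - X y i * dpart i (\<lambda>y. V y j) y = 0" by simp
  qed
  finally show "lie n V X y j = 0" by simp
qed

lemma lie_supported_last_top:
  assumes V: "triangular_vf n V" and X: "supported_last n q X" and q: "1 \<le> q" "q < n"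
  shows "lie n V X y (n - q) = - X y (n - q + 1) * dpart (n - q + 1) (\<lambda>y. V y (n - q)) y"
proof -
  let ?f = "\<lambda>i. V y i * dpart i (\<lambda>y. X y (n - q)) y - X y i * dpart i (\<lambda>y. V y (n - q)) y"
  have nq: "n - q \<in> {1..n}" using q by auto
  have i0: "n - q + 1 \<in> {1..n}" using q by auto
  have z: "dpart i (\<lambda>y. X y (n - q)) y = 0" for i
    using X nq q by (intro dpart_zero) (auto simp: supported_last_def)
  have "lie n V X y (n - q) = (\<Sum>i\<in>{1..n}. ?f i)" by (simp add: lie_def)
  also have "\<dots> = ?f (n - q + 1) + (\<Sum>i\<in>{1..n} - {n - q + 1}. ?f i)"
    by (rule sum.remove[OF _ i0]) simp
  also have "(\<Sum>i\<in>{1..n} - {n - q + 1}. ?f i) = 0"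
  proof (rule sum.neutral, intro ballI)
    fix i assume i: "i \<in> {1..n} - {n - q + 1}"
    show "?f i = 0"
    proof (cases "i + q \<le> n")
      case True then show ?thesis using X i z by (simp add: supported_last_def)
    next
      case False then have "n - q + 1 < i" using i by auto
      then show ?thesis using triangular_vf_dpart[OF V nq] z by simp
    qed
  qed
  finally show ?thesis using z by simp
qed

lemma lie_supported_last_stall:
  assumes V: "triangular_vf n V" and X: "supported_last n q X"
    and stall: "\<forall>y. V y (n - q) = 0" and q: "1 \<le> q" "q < n"
  shows "supported_last n q (lie n V X)"
  unfolding supported_last_def
proof (intro allI ballI impI)
  fix y j assume j: "j \<in> {1..n}" "j + q \<le> n"
  show "lie n V X y j = 0"
  proof (cases "j + Suc q \<le> n")
    case True
    then show ?thesis using lie_supported_last[OF V X] j(1) by (simp add: supported_last_def)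
  next
    case False
    then have "j = n - q" using j by simp
    then show ?thesis using lie_supported_last_top[OF V X q] stall by (simp add: dpart_zero)
  qed
qed

lemma lie_coord_vf: "m \<in> {1..n} \<Longrightarrow> lie n (coord_vf m) V y j = dpart m (\<lambda>y. V y j) y"
proof -
  assume m: "m \<in> {1..n}"
  have "lie n (coord_vf m) V y j = (\<Sum>i\<in>{1..n}. if i = m then dpart i (\<lambda>y. V y j) y else 0)"
    unfolding lie_def coord_vf_def by (rule sum.cong) (auto simp: dpart_const)
  also have "\<dots> = dpart m (\<lambda>y. V y j) y" using m by simp
  finally show ?thesis .
qed

lemma lie_coord_vf_twice_triangular:
  assumes "triangular_vf n V" "m \<in> {1..n}" "j \<in> {1..n}" "j + 1 < m"
  shows "lie n (coord_vf m) (lie n (coord_vf m) V) y j = 0"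
  using assms by (simp add: lie_coord_vf triangular_vf_dpart dpart_zero)

lemma spans_last_coords_0: "spans_last_coords n 0 L"
  by (auto simp: spans_last_coords_def)

lemma spans_last_coords_mono: "set L \<subseteq> set M \<Longrightarrow> spans_last_coords n q L \<Longrightarrow> spans_last_coords n q M"
  unfolding spans_last_coords_def using in_span_mono by blast

lemma spans_last_coords_Suc:
  assumes "spans_last_coords n q L" "in_span n L (coord_vf (n - q) y)"
  shows "spans_last_coords n (Suc q) L"
  unfolding spans_last_coords_def
proof (intro ballI impI allI)
  fix j y' assume j: "j \<in> {1..n}" "n < j + Suc q"
  show "in_span n L (coord_vf j y')"
  proof (cases "n < j + q")
    case True
    then show ?thesis using assms(1) j(1) by (simp add: spans_last_coords_def)
  next
    case False
    then have "j = n - q" using j by simp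
    then have "coord_vf j y' = coord_vf (n - q) y" by (simp add: coord_vf_def)
    then show ?thesis using assms(2) by simp
  qed
qed

lemma in_span_of_last_coords:
  assumes x: "\<forall>j\<in>{1..n}. j + q \<le> n \<longrightarrow> x j = 0" and L: "spans_last_coords n q L"
  shows "in_span n L x"
proof -
  let ?S = "{j\<in>{1..n}. n < j + q}"
  have "in_span n L (\<lambda>i. \<Sum>j\<in>?S. x j * coord_vf j undefined i)"
    using L by (intro in_span_sum ballI in_span_scale) (auto simp: spans_last_coords_def)
  moreover have "x i = (\<Sum>j\<in>?S. x j * coord_vf j undefined i)" if i: "i \<in> {1..n}" for i
  proof -
    have "(\<Sum>j\<in>?S. x j * coord_vf j undefined i) = (\<Sum>j\<in>?S. if j = i then x i else 0)"
      by (rule sum.cong) (auto simp: coord_vf_def)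
    also have "\<dots> = x i" using x i by auto
    finally show ?thesis by simp
  qed
  ultimately show ?thesis by (subst in_span_cong) auto
qed

lemma spans_last_coords_SucI:
  assumes X: "supported_last n (Suc q) X" "X y (n - q) \<noteq> 0" "in_span n L (X y)"
    and L: "spans_last_coords n q L" and q: "q < n"
  shows "spans_last_coords n (Suc q) L"
proof (rule spans_last_coords_Suc[OF L])
  define t where "t = X y (n - q)"
  define x where "x = (\<lambda>i. coord_vf (n - q) y i - (1 / t) * X y i)"
  have "in_span n L x"
  proof (rule in_span_of_last_coords[OF _ L], intro ballI impI)
    fix j assume j: "j \<in> {1..n}" "j + q \<le> n"
    show "x j = 0"
    proof (cases "j = n - q")
      case True
      then show ?thesis using X(2) by (simp add: x_def t_def coord_vf_def)
    next
      case False
      then show ?thesis using X(1) j by (simp add: x_def coord_vf_def supported_last_def)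
    qed
  qed
  then have "in_span n L (\<lambda>i. x i + (1 / t) * X y i)"
    by (rule in_span_add) (rule in_span_scale[OF X(3)])
  then show "in_span n L (coord_vf (n - q) y)" by (simp add: x_def)
qed

locale gtf =
  fixes n k1 k2 :: nat and al bl :: "nat \<Rightarrow> pt \<Rightarrow> real" and U :: "pt set"
  assumes k: "1 \<le> k1" "1 \<le> k2" "k1 + k2 \<le> n"
    and open_U: "open_n n U"
    and smooth: "\<forall>l\<in>{k1+k2..n-1}. smooth_on n U (al l) \<and> smooth_on n U (bl l)"
    and triang: "\<forall>l\<in>{k1+k2..n-1}. \<forall>z w. (\<forall>j\<in>{1..l+1}. z j = w j) \<longrightarrow>
                    al l z = al l w \<and> bl l z = bl l w"
    and anz: "\<forall>l\<in>{k1+k2..n-1}. \<forall>z\<in>U.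
                 dpart (l+1) (al l) z \<noteq> 0 \<or> dpart (l+1) (bl l) z \<noteq> 0"
begin

abbreviation "a \<equiv> gtf_a n k1 k2 al"
abbreviation "b1 \<equiv> gtf_b1 n k1 k2 bl"
abbreviation "b2 \<equiv> gtf_b2 n"
abbreviation "D \<equiv> Dseq n a b1 b2"

lemma a_component:
  "(\<lambda>y. a y j) = (if 1 \<le> j \<and> j < k1 then (\<lambda>y. y (j + 1))
     else if k1 < j \<and> j < k1 + k2 then (\<lambda>y. y (j + 1))
     else if k1 + k2 \<le> j \<and> j \<le> n - 1 then al j else (\<lambda>y. 0))"
  by (auto simp: gtf_a_def fun_eq_iff)

lemma b1_component:
  "(\<lambda>y. b1 y j) = (if j = k1 then (\<lambda>y. 1)
     else if k1 + k2 \<le> j \<and> j \<le> n - 1 then bl j else (\<lambda>y. 0))"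
  by (auto simp: gtf_b1_def fun_eq_iff)

lemma smooth_a: "smooth_vf n U a"
  unfolding smooth_vf_def a_component
  using k smooth by (auto intro!: smooth_coord[OF open_U] smooth_const)

lemma smooth_b1: "smooth_vf n U b1"
  unfolding smooth_vf_def b1_component using smooth by (auto intro!: smooth_const)

lemma smooth_b2: "smooth_vf n U b2"
  by (simp add: smooth_vf_def gtf_b2_def coord_vf_def smooth_const)

lemma triang_coeffs:
  assumes "k1 + k2 \<le> j" "j \<le> n - 1" "j + 1 < i"
  shows "al j (y(i := t)) = al j y" "bl j (y(i := t)) = bl j y"
  using triang assms by (auto dest!: bspec[of _ _ j])

lemma triangular_a: "triangular_vf n a"
  unfolding triangular_vf_def gtf_a_def using triang_coeffs(1) by auto

lemma triangular_b1: "triangular_vf n b1"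
  unfolding triangular_vf_def gtf_b1_def using triang_coeffs(2) by auto

lemma ad_b2_supported: "supported_last n (Suc m) (ad_pow n a m b2)"
proof (induction m)
  case 0
  show ?case by (auto simp: supported_last_def gtf_b2_def coord_vf_def)
next
  case (Suc m)
  then show ?case using lie_supported_last[OF triangular_a] by simp
qed

text \<open>The lowest possibly nonzero component of \<open>ad_a^m b2\<close>, the coefficient of \<open>\<partial>_{n-m}\<close>.\<close>
definition top_coeff :: "nat \<Rightarrow> pt \<Rightarrow> real" where
  "top_coeff m y = ad_pow n a m b2 y (n - m)"

lemma top_coeff_0: "top_coeff 0 y = 1"
  by (simp add: top_coeff_def gtf_b2_def coord_vf_def)

lemma top_coeff_Suc:
  assumes "Suc m < n"
  shows "top_coeff (Suc m) y = - top_coeff m y * dpart (n - m) (\<lambda>y. a y (n - Suc m)) y"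
proof -
  have "lie n a (ad_pow n a m b2) y (n - Suc m)
      = - ad_pow n a m b2 y (n - Suc m + 1) * dpart (n - Suc m + 1) (\<lambda>y. a y (n - Suc m)) y"
    by (rule lie_supported_last_top[OF triangular_a ad_b2_supported]) (use assms in auto)
  moreover have "n - Suc m + 1 = n - m" using assms by simp
  ultimately show ?thesis by (simp add: top_coeff_def)
qed

lemma spans_last_coords_D:
  "q \<le> n \<Longrightarrow> \<forall>m<q. top_coeff m y \<noteq> 0 \<Longrightarrow> spans_last_coords n q (dval (D q) y)"
proof (induction q)
  case 0
  show ?case by (rule spans_last_coords_0)
next
  case (Suc q)
  have q: "q < n" using Suc.prems(1) by simp
  have nz: "ad_pow n a q b2 y (n - q) \<noteq> 0" using Suc.prems(2) by (simp add: top_coeff_def)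
  have "spans_last_coords n q (dval (D q) y)" using Suc by simp
  then have L: "spans_last_coords n q (dval (D (Suc q)) y)"
    by (rule spans_last_coords_mono[rotated]) (auto simp: set_dval Dseq_Suc_set)
  have "in_span n (dval (D (Suc q)) y) (ad_pow n a q b2 y)"
    by (rule in_span_dval) (simp add: Dseq_Suc_set)
  then show ?case by (rule spans_last_coords_SucI[OF ad_b2_supported nz _ L q])
qed

text \<open>The \<open>\<partial>_{k1}\<close> component of the drift vanishes, so the chain \<open>ad_a^m b2\<close> cannot grow
  past the coordinate \<open>z^{k1}\<close>.\<close>
lemma ad_b2_stalls_at_k1:
  assumes l: "n - Suc q = k1" and m: "q \<le> m"
  shows "supported_last n (Suc q) (ad_pow n a m b2)"
  using m
proof (induction m rule: dec_induct)
  case base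
  show ?case by (rule ad_b2_supported)
next
  case (step m)
  have stall: "\<forall>y. a y (n - Suc q) = 0" using l k by (simp add: gtf_a_def)
  have "Suc q < n" using l k by simp
  then show ?case using lie_supported_last_stall[OF triangular_a step.IH stall] by simp
qed

end

locale gtf_corank2 = gtf +
  fixes p :: nat
  assumes U_ne: "U \<noteq> {}" and p: "1 \<le> p"
    and crank: "\<forall>i\<le>p+1. \<forall>z\<in>U. \<forall>z'\<in>U. rank_n n (dval (D i) z) = rank_n n (dval (D i) z')"
    and invol: "\<forall>i\<in>{1..p}. \<forall>z\<in>U. involutive_at n (D i) z"
    and corank: "\<forall>z\<in>U. rank_n n (dval (D p) z) = rank_n n (dval (D (p-1)) z) + 2
                       \<and> rank_n n (dval (D (p+1)) z) = rank_n n (dval (D p) z) + 2"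
begin

lemma rank_increment_le_one_propagates:
  assumes "j0 \<le> j" "j \<le> p" and inc: "\<forall>y\<in>U. rank_n n (dval (D (Suc j0)) y) \<le> rank_n n (dval (D j0) y) + 1"
  shows "\<forall>y\<in>U. rank_n n (dval (D (Suc j)) y) \<le> rank_n n (dval (D j) y) + 1"
  using assms(1,2)
proof (induction j rule: dec_induct)
  case base
  show ?case by (rule inc)
next
  case (step j)
  show ?case
  proof
    fix y0 assume y0: "y0 \<in> U"
    show "rank_n n (dval (D (Suc (Suc j))) y0) \<le> rank_n n (dval (D (Suc j)) y0) + 1"
    proof (rule Dseq_rank_increment_persists[OF open_U y0 smooth_a smooth_b1 smooth_b2])
      have "Suc j \<le> p + 1" using step.prems by simp
      then show "\<forall>y\<in>U. rank_n n (dval (D (Suc j)) y) = rank_n n (dval (D (Suc j)) y0)"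
        using crank y0 by blast
      show "rank_n n (dval (D (Suc j)) y0) \<le> rank_n n (dval (D j) y0) + 1"
        using step y0 by simp
    qed
  qed
qed

text \<open>Absorbing \<open>ad_a^j b2\<close> at a single point lowers the rank increment to one there, hence
  everywhere by constant rank, hence up to \<open>D_{p+1}\<close>, against the corank assumption.\<close>
lemma ad_b2_not_absorbed:
  assumes j: "j \<le> p" and z: "z \<in> U"
  shows "\<not> in_span n (dval (D j) z) (ad_pow n a j b2 z)"
proof
  assume "in_span n (dval (D j) z) (ad_pow n a j b2 z)"
  then have at_z: "rank_n n (dval (D (Suc j)) z) \<le> rank_n n (dval (D j) z) + 1"
    by (rule Dseq_rank_Suc_le)
  have "rank_n n (dval (D (Suc j)) y) \<le> rank_n n (dval (D j) y) + 1" if y: "y \<in> U" for y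
  proof -
    have "Suc j \<le> p + 1" "j \<le> p + 1" using j by simp_all
    then have "rank_n n (dval (D (Suc j)) y) = rank_n n (dval (D (Suc j)) z)"
      "rank_n n (dval (D j) y) = rank_n n (dval (D j) z)"
      using crank y z by blast+
    then show ?thesis using at_z by simp
  qed
  then have "\<forall>y\<in>U. rank_n n (dval (D (Suc j)) y) \<le> rank_n n (dval (D j) y) + 1" ..
  then have "\<forall>y\<in>U. rank_n n (dval (D (Suc p)) y) \<le> rank_n n (dval (D p) y) + 1"
    by (rule rank_increment_le_one_propagates[OF j order_refl])
  then show False using corank z by fastforce
qed

lemma not_stalled_at_k1:
  assumes q: "Suc q \<le> p" "Suc q < n" and nz: "\<forall>m\<le>q. \<forall>y\<in>U. top_coeff m y \<noteq> 0"
  shows "n - Suc q \<noteq> k1"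
proof
  assume l: "n - Suc q = k1"
  obtain z where z: "z \<in> U" using U_ne by blast
  have "spans_last_coords n (Suc q) (dval (D (Suc q)) z)"
    using nz z q by (intro spans_last_coords_D) auto
  then have "spans_last_coords n (Suc q) (dval (D p) z)"
    by (rule spans_last_coords_mono[rotated]) (simp add: set_dval image_mono Dseq_mono[OF q(1)])
  then have "in_span n (dval (D p) z) (ad_pow n a p b2 z)"
    using ad_b2_stalls_at_k1[OF l, of p] q(1)
    by (intro in_span_of_last_coords) (auto simp: supported_last_def)
  then show False using ad_b2_not_absorbed[OF order_refl z] by contradiction
qed

text \<open>In the nonlinear block a vanishing coefficient would force \<open>\<partial>_{l+1} b^l \<noteq> 0\<close>; then the
  bracket \<open>[b1, ad_a^q b2] \<in> D_{q+1}\<close> (involutivity) brings in \<open>\<partial>_l\<close>, which absorbs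
  \<open>ad_a^{q+1} b2\<close>.\<close>
lemma top_coeff_Suc_nonzero_block:
  assumes q: "Suc q \<le> p" "Suc q < n" and l: "k1 + k2 \<le> n - Suc q"
    and nz: "\<forall>m\<le>q. \<forall>y\<in>U. top_coeff m y \<noteq> 0" and z: "z \<in> U"
  shows "top_coeff (Suc q) z \<noteq> 0"
proof
  assume top0: "top_coeff (Suc q) z = 0"
  define l where "l = n - Suc q"
  have blk: "l \<in> {k1+k2..n-1}" and l1: "l + 1 = n - q" using l q by (auto simp: l_def)
  have tq: "top_coeff q z \<noteq> 0" using nz z by blast
  have "dpart (l + 1) (al l) z = 0"
    using top0 tq top_coeff_Suc[OF q(2), of z] blk l1 by (simp add: gtf_a_def l_def)
  then have db: "dpart (l + 1) (bl l) z \<noteq> 0" using anz blk z by blast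
  let ?X = "lie n b1 (ad_pow n a q b2)"
  have X: "supported_last n (Suc (Suc q)) ?X"
    by (rule lie_supported_last[OF triangular_b1 ad_b2_supported])
  have "Suc (n - Suc q) = n - q" using q(2) by simp
  then have "?X z l = - top_coeff q z * dpart (l + 1) (\<lambda>y. b1 y l) z"
    using lie_supported_last_top[OF triangular_b1 ad_b2_supported, of q z] q(2)
    by (simp add: top_coeff_def l_def)
  also have "(\<lambda>y. b1 y l) = bl l" using blk k by (auto simp: gtf_b1_def)
  finally have Xl: "?X z (n - Suc q) \<noteq> 0" using tq db by (simp add: l_def)
  have "b1 \<in> set (D (Suc q))" "ad_pow n a q b2 \<in> set (D (Suc q))"
    using Dseq_mono[of 1 "Suc q" n a b1 b2] by (auto simp: Dseq_Suc_set)
  then have Xin: "in_span n (dval (D (Suc q)) z) (?X z)"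
    using invol q(1) z unfolding involutive_at_def by auto
  have "spans_last_coords n (Suc q) (dval (D (Suc q)) z)"
    using nz z q by (intro spans_last_coords_D) auto
  then have "spans_last_coords n (Suc (Suc q)) (dval (D (Suc q)) z)"
    by (rule spans_last_coords_SucI[OF X Xl Xin _ q(2)])
  then have "in_span n (dval (D (Suc q)) z) (ad_pow n a (Suc q) b2 z)"
    using ad_b2_supported[of "Suc q"] by (intro in_span_of_last_coords) (auto simp: supported_last_def)
  then show False using ad_b2_not_absorbed[OF q(1) z] by contradiction
qed

lemma top_coeff_nonzero:
  "q \<le> p \<Longrightarrow> k1 < n - q \<and> (\<forall>m\<le>q. \<forall>y\<in>U. top_coeff m y \<noteq> 0)"
proof (induction q)
  case 0
  show ?case using k by (simp add: top_coeff_0)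
next
  case (Suc q)
  then have IH: "k1 < n - q" "\<forall>m\<le>q. \<forall>y\<in>U. top_coeff m y \<noteq> 0" by simp_all
  have q: "Suc q \<le> p" "Suc q < n" using Suc.prems IH(1) k by simp_all
  have l: "k1 < n - Suc q" using not_stalled_at_k1[OF q IH(2)] IH(1) by simp
  have "top_coeff (Suc q) y \<noteq> 0" if y: "y \<in> U" for y
  proof (cases "n - Suc q < k1 + k2")
    case True
    then have "(\<lambda>y. a y (n - Suc q)) = (\<lambda>y. y (n - q))"
      using l q(2) by (auto simp: gtf_a_def Suc_diff_Suc)
    then show ?thesis using top_coeff_Suc[OF q(2), of y] IH(2) y by (simp add: dpart_coord)
  next
    case False
    then show ?thesis using top_coeff_Suc_nonzero_block[OF q _ IH(2) y] by simp
  qed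
  then show ?case using l IH(2) le_Suc_eq by auto
qed

abbreviation "v1 \<equiv> ad_pow n a (p - 1) b1"
abbreviation "v2 \<equiv> coord_vf (n - (p - 1))"

lemma p_less_n: "p < n"
  using top_coeff_nonzero[of p] by (auto simp: less_diff_conv)

lemma spans_last_coords_D_upto: "q \<le> Suc p \<Longrightarrow> z \<in> U \<Longrightarrow> spans_last_coords n q (dval (D q) z)"
  using top_coeff_nonzero[of p] p_less_n by (intro spans_last_coords_D) auto

lemma v2_in_D: "z \<in> U \<Longrightarrow> in_span n (dval (D p) z) (v2 z)"
proof -
  assume z: "z \<in> U"
  have "n - (p - 1) \<in> {1..n}" "n < n - (p - 1) + p" using p p_less_n by auto
  then show ?thesis
    using spans_last_coords_D_upto[OF le_SucI[OF order_refl] z] unfolding spans_last_coords_def by blast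
qed

lemma v2_not_in_D_prev:
  assumes z: "z \<in> U"
  shows "\<not> in_span n (dval (D (p - 1)) z) (v2 z)"
proof
  assume "in_span n (dval (D (p - 1)) z) (v2 z)"
  then have "spans_last_coords n p (dval (D (p - 1)) z)"
    using spans_last_coords_Suc[OF spans_last_coords_D_upto[of "p - 1" z]] z p by simp
  then have "in_span n (dval (D (p - 1)) z) (ad_pow n a (p - 1) b2 z)"
    using ad_b2_supported[of "p - 1"] p by (intro in_span_of_last_coords) (auto simp: supported_last_def)
  then show False using ad_b2_not_absorbed[of "p - 1" z] z by simp
qed

lemma D_eq_prev_plus_v1_v2:
  assumes z: "z \<in> U"
  shows "in_span n (dval (D p) z) x \<longleftrightarrow> in_span n (dval (D (p - 1)) z @ [v1 z, v2 z]) x"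
proof (rule in_span_iff_of_spans)
  let ?L = "dval (D (p - 1)) z @ [v1 z, v2 z]"
  have Dp: "set (D p) = set (D (p - 1)) \<union> {v1, ad_pow n a (p - 1) b2}"
    using Dseq_Suc_set[of n a b1 b2 "p - 1"] p by simp
  have "spans_last_coords n (p - 1) ?L"
    by (rule spans_last_coords_mono[OF _ spans_last_coords_D_upto[OF _ z]]) auto
  then have "spans_last_coords n p ?L"
    using spans_last_coords_Suc[of n "p - 1" ?L z] p by (simp add: in_span_mem)
  then have "in_span n ?L (ad_pow n a (p - 1) b2 z)"
    using ad_b2_supported[of "p - 1"] p by (intro in_span_of_last_coords) (auto simp: supported_last_def)
  then show "\<forall>v\<in>set (dval (D p) z). in_span n ?L v"
    using Dp by (auto simp: set_dval intro: in_span_mem)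
  show "\<forall>v\<in>set ?L. in_span n (dval (D p) z) v"
    using Dp v2_in_D[OF z] in_span_Dseq_mono[of "p - 1" p]
    by (auto simp: set_dval intro: in_span_mem)
qed

lemma v2_second_bracket_in_D:
  assumes z: "z \<in> U"
  shows "in_span n (dval (D (p + 1)) z) (lie n v2 (lie n v2 a) z)"
proof (rule in_span_of_last_coords)
  show "spans_last_coords n (Suc p) (dval (D (p + 1)) z)"
    using spans_last_coords_D_upto[OF _ z] by simp
  show "\<forall>j\<in>{1..n}. j + Suc p \<le> n \<longrightarrow> lie n v2 (lie n v2 a) z j = 0"
    using p p_less_n by (auto intro!: lie_coord_vf_twice_triangular[OF triangular_a])
qed

end

theorem lemma2:
  fixes n k1 k2 p :: nat
    and al bl :: "nat \<Rightarrow> pt \<Rightarrow> real"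
    and U :: "pt set"
  defines "a \<equiv> gtf_a n k1 k2 al"
      and "b1 \<equiv> gtf_b1 n k1 k2 bl"
      and "b2 \<equiv> gtf_b2 n"
  defines "D \<equiv> Dseq n a b1 b2"
  defines "v1 \<equiv> ad_pow n a (p - 1) b1"
      and "v2 \<equiv> coord_vf (n - (p - 1))"
  assumes k: "1 \<le> k1" "1 \<le> k2" "k1 + k2 \<le> n"
    and U: "open_n n U" "U \<noteq> {}"
    \<comment> \<open>GTF structure: a^l, b^l smooth, depending only on z^1..z^(l+1)\<close>
    and smooth: "\<forall>l\<in>{k1+k2..n-1}. smooth_on n U (al l) \<and> smooth_on n U (bl l)"
    and triang: "\<forall>l\<in>{k1+k2..n-1}. \<forall>z w. (\<forall>j\<in>{1..l+1}. z j = w j) \<longrightarrow>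
                    al l z = al l w \<and> bl l z = bl l w"
    and bnz: "k1 + k2 \<le> n - 1 \<longrightarrow> (\<forall>z\<in>U. bl (k1+k2) z \<noteq> 0)"
    and anz: "\<forall>l\<in>{k1+k2..n-1}. \<forall>z\<in>U.
                 dpart (l+1) (al l) z \<noteq> 0 \<or> dpart (l+1) (bl l) z \<noteq> 0"
    \<comment> \<open>constant rank of the distributions on U\<close>
    and crank: "\<forall>i\<le>p+1. \<forall>z\<in>U. \<forall>z'\<in>U. rank_n n (dval (D i) z) = rank_n n (dval (D i) z')"
    and p: "1 \<le> p"
    and invol: "\<forall>i\<in>{1..p}. \<forall>z\<in>U. involutive_at n (D i) z"
    and noninvol: "\<forall>z\<in>U. \<not> involutive_at n (D (p+1)) z"
    and corank: "\<forall>z\<in>U. rank_n n (dval (D p) z) = rank_n n (dval (D (p-1)) z) + 2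
                       \<and> rank_n n (dval (D (p+1)) z) = rank_n n (dval (D p) z) + 2"
    and notcauchy: "\<forall>V. open_n n V \<and> V \<noteq> {} \<and> V \<subseteq> U \<longrightarrow>
                       \<not> (\<forall>g\<in>set (D p). g \<in> cauchy_char n V (D (p+1)))"
    and adprev: "\<forall>g\<in>set (D (p-1)). in_distr n U (D p) (lie n a g)"
    and nextD: "\<forall>z\<in>U. \<forall>x. in_span n (dval (D (p+1)) z) x \<longleftrightarrow>
                   in_span n (dval (D p) z @ map (\<lambda>g. lie n a g z) (D p)) x"
  shows "\<forall>z\<in>U.
           (\<forall>x. in_span n (dval (D p) z) x \<longleftrightarrow> in_span n (dval (D (p-1)) z @ [v1 z, v2 z]) x)
         \<and> ((0::real), (1::real)) \<noteq> (0, 0)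
         \<and> in_span n (dval (D (p+1)) z) (quad_expr n a v1 v2 0 1 z)
         \<and> (\<lambda>j. 0 * v1 z j + 1 * v2 z j) = coord_vf (n - (p - 1)) z
         \<and> in_span n (dval (D p) z) (\<lambda>j. 0 * v1 z j + 1 * v2 z j)
         \<and> \<not> in_span n (dval (D (p-1)) z) (\<lambda>j. 0 * v1 z j + 1 * v2 z j)"
proof -
  have loc: "gtf_corank2 n k1 k2 al bl U p"
  proof (rule gtf_corank2.intro)
    show "gtf n k1 k2 al bl U" by (rule gtf.intro) (rule k U(1) smooth triang anz)+
    show "gtf_corank2_axioms n k1 k2 al bl U p"
      by (rule gtf_corank2_axioms.intro)
        (rule U(2) p crank[unfolded D_def a_def b1_def b2_def] invol[unfolded D_def a_def b1_def b2_def]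
          corank[unfolded D_def a_def b1_def b2_def])+
  qed
  show ?thesis
    unfolding v1_def v2_def D_def a_def b1_def b2_def quad_expr_def
    using gtf_corank2.D_eq_prev_plus_v1_v2[OF loc] gtf_corank2.v2_in_D[OF loc]
      gtf_corank2.v2_not_in_D_prev[OF loc] gtf_corank2.v2_second_bracket_in_D[OF loc]
    by simp
qed

end
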